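(* Suppose $\mathcal H=P_i\mathcal H\oplus P_j\mathcal H$ with $P_i+P_j=\mathbb 1$, $P_iP_j=0$, where $P_i$ and $P_j$ commute with $H$ and every $h_\alpha$, and each of $P_i\mathcal H$, $P_j\mathcal H$ contains no nonzero proper collecting subspace. Then there exists a nonzero operator $\sigma=P_i\sigma P_j$ with $\mathcal D(\sigma)=0$ if and only if there exists a unitary $U$ commuting with $H$ and every $h_\alpha$ such that $UP_j=P_iU$ and $U^2=\mathbb 1$. In that case the stationary operator $\sigma=P_i\sigma P_j$ is unique up to a constant factor (it is a multiple of $U\rho_j$, where $\rho_j$ is the unique stationary state supported in $P_j\mathcal H$).
   Context: Let $\mathcal H$ be a finite-dimensional complex Hilbert space, $H=H^\dagger$ and $\{h_\alpha\}$ a finite family of operators on $\mathcal H$, $\mathcal D(\rho)=-i[H,\rho]+\sum_\alpha(h_\alpha\rho h_\alpha^\dagger-\tfrac12(h_\alpha^\dagger h_\alpha\rho+\rho h_\alpha^\dagger h_\alpha))$, $\mathcal T^t=e^{t\mathcal D}$. A subspace $P\mathcal H$ ($P$ an orthogonal projector) is collecting if $\mathcal T^t(P\sigma P)=P\,\mathcal T^t(P\sigma P)\,P$ for all $t>0$ and all operators $\sigma$. *)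

theory Defs
  imports "HOL-Analysis.Analysis"
begin

text \<open>Operators on the finite-dimensional complex Hilbert space \<open>\<complex>^'n\<close> are
  represented as square matrices \<open>complex^'n^'n\<close>; \<open>**\<close> is the operator product,
  \<open>mat 1\<close> the identity.\<close>

type_synonym 'n op = "complex^'n^'n"

definition adj :: "'n::finite op \<Rightarrow> 'n op" where
  "adj A = (\<chi> i j. cnj (A $ j $ i))"

definition cscale :: "complex \<Rightarrow> 'n::finite op \<Rightarrow> 'n op" where
  "cscale c A = (\<chi> i j. c * A $ i $ j)"

definition trace_op :: "'n::finite op \<Rightarrow> complex" where
  "trace_op A = (\<Sum>i\<in>UNIV. A $ i $ i)"

definition orth_proj :: "'n::finite op \<Rightarrow> bool" where
  "orth_proj P \<longleftrightarrow> P = adj P \<and> P ** P = P"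

definition unitary_op :: "'n::finite op \<Rightarrow> bool" where
  "unitary_op U \<longleftrightarrow> adj U ** U = mat 1 \<and> U ** adj U = mat 1"

definition psd_op :: "'n::finite op \<Rightarrow> bool" where
  "psd_op A \<longleftrightarrow> A = adj A \<and> (\<forall>v::complex^'n. 0 \<le> Re (\<Sum>i\<in>UNIV. cnj (v $ i) * (A *v v) $ i))"

definition density_op :: "'n::finite op \<Rightarrow> bool" where
  "density_op \<rho> \<longleftrightarrow> psd_op \<rho> \<and> trace_op \<rho> = 1"

definition lindblad :: "'n::finite op \<Rightarrow> ('a \<Rightarrow> 'n op) \<Rightarrow> 'a set \<Rightarrow> 'n op \<Rightarrow> 'n op" where
  "lindblad H h A \<rho> =
     cscale (- \<i>) (H ** \<rho> - \<rho> ** H)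
     + (\<Sum>\<alpha>\<in>A. h \<alpha> ** \<rho> ** adj (h \<alpha>)
                 - cscale (1/2) (adj (h \<alpha>) ** h \<alpha> ** \<rho> + \<rho> ** adj (h \<alpha>) ** h \<alpha>))"

definition semigroup :: "'n::finite op \<Rightarrow> ('a \<Rightarrow> 'n op) \<Rightarrow> 'a set \<Rightarrow> real \<Rightarrow> 'n op \<Rightarrow> 'n op" where
  "semigroup H h A t \<rho> = (\<Sum>k. (t ^ k / fact k) *\<^sub>R ((lindblad H h A ^^ k) \<rho>))"

definition collecting :: "'n::finite op \<Rightarrow> ('a \<Rightarrow> 'n op) \<Rightarrow> 'a set \<Rightarrow> 'n op \<Rightarrow> bool" where
  "collecting H h A P \<longleftrightarrow> orth_proj P \<and>
     (\<forall>t>0. \<forall>\<sigma>. semigroup H h A t (P ** \<sigma> ** P)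
                 = P ** semigroup H h A t (P ** \<sigma> ** P) ** P)"

definition no_proper_collecting :: "'n::finite op \<Rightarrow> ('a \<Rightarrow> 'n op) \<Rightarrow> 'a set \<Rightarrow> 'n op \<Rightarrow> bool" where
  "no_proper_collecting H h A P \<longleftrightarrow>
     (\<forall>Q. orth_proj Q \<and> P ** Q = Q \<and> Q \<noteq> 0 \<and> Q \<noteq> P \<longrightarrow> \<not> collecting H h A Q)"

end

theory Submission
  imports Defs
begin

text \<open>
  Write \<open>D\<close> for the Lindblad generator and \<open>D\<^sup>*\<close> for its adjoint with
  respect to the Hilbert-Schmidt pairing \<open>\<langle>X,Y\<rangle> = tr (X\<^sup>\<dagger> Y)\<close>; with \<open>S = \<Sum> h\<^sub>\<alpha>\<^sup>\<dagger> h\<^sub>\<alpha>\<close>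
  and \<open>K = -iH - S/2\<close> one has \<open>D(X) = KX + XK\<^sup>\<dagger> + \<Sum> h X h\<^sup>\<dagger>\<close>,
  \<open>D\<^sup>*(Y) = K\<^sup>\<dagger>Y + YK + \<Sum> h\<^sup>\<dagger> Y h\<close> and \<open>D\<^sup>*(1) = 0\<close>.  Both maps commute with left and right
  multiplication by any operator commuting with \<open>H\<close>, all \<open>h\<^sub>\<alpha>\<close> and all \<open>h\<^sub>\<alpha>\<^sup>\<dagger>\<close>.

  (1) Irreducibility: if \<open>P\<close> commutes with the generator and \<open>P\<H>\<close> contains no proper
      collecting subspace, every \<open>Y = PYP\<close> with \<open>D\<^sup>*(Y) = 0\<close> is a multiple of \<open>P\<close>: for
      hermitian \<open>Y\<close>, the top eigenspace of \<open>Y\<close> inside \<open>P\<H>\<close> is invariant under \<open>K\<close> and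
      all \<open>h\<^sub>\<alpha>\<close>, hence collecting, hence all of \<open>P\<H>\<close>.
  (2) Duality: restricted to the block \<open>P \<cdot> Q\<close>, \<open>D\<close> and \<open>D\<^sup>*\<close> are adjoint, so in finite
      dimension one has a nonzero block kernel iff the other has.
  (3) Intertwiners: a block \<open>W = P\<^sub>i W P\<^sub>j\<close> with \<open>D\<^sup>*(W) = 0\<close> commutes with \<open>H\<close> and all
      \<open>h\<^sub>\<alpha>\<close> (dissipation identity plus (1)); then \<open>W\<^sup>\<dagger>W\<close>, \<open>WW\<^sup>\<dagger>\<close> are the same positive
      multiple of \<open>P\<^sub>j\<close>, \<open>P\<^sub>i\<close>, and the normalised \<open>V\<close> yields the symmetry \<open>U = V + V\<^sup>\<dagger>\<close>.
      Conversely \<open>U\<close> maps the \<open>P\<^sub>j\<close>-block kernel of \<open>D\<close>, nonzero by (2) since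
      \<open>D\<^sup>*(P\<^sub>j) = 0\<close>, into the block \<open>P\<^sub>i \<cdot> P\<^sub>j\<close>.
  (4) Uniqueness: by (1) and duality the \<open>P\<^sub>j\<close>-block kernel of \<open>D\<close> is one-dimensional,
      and it contains a density operator by Brouwer's fixed point theorem applied to the
      normalised resolvent \<open>\<lambda>(\<lambda> - D)\<^sup>-\<^sup>1\<close>, which preserves positivity for large \<open>\<lambda>\<close>.
\<close>

section \<open>Matrix algebra\<close>

lemma adj_nth [simp]: "adj A $ i $ j = cnj (A $ j $ i)"
  by (simp add: adj_def)

lemma adj_adj [simp]: "adj (adj A) = A"
  by (simp add: adj_def vec_eq_iff)

lemma adj_mult: "adj (A ** B) = adj B ** adj (A::'n::finite op)"
  by (simp add: adj_def matrix_matrix_mult_def vec_eq_iff mult.commute)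

lemma adj_add [simp]: "adj (A + B) = adj A + adj B"
  by (simp add: adj_def vec_eq_iff)

lemma adj_diff [simp]: "adj (A - B) = adj A - adj B"
  by (simp add: adj_def vec_eq_iff)

lemma adj_uminus [simp]: "adj (- A) = - adj A"
  by (simp add: adj_def vec_eq_iff)

lemma adj_zero [simp]: "adj 0 = 0"
  by (simp add: adj_def vec_eq_iff)

lemma adj_mat [simp]: "adj (mat c) = mat (cnj c)"
  by (simp add: adj_def vec_eq_iff mat_def)

lemma adj_sum: "adj (\<Sum>a\<in>S. f a) = (\<Sum>a\<in>S. adj (f a))"
  by (induction S rule: infinite_finite_induct) auto

lemma matrix_add_rdistrib: "(A + B) ** C = A ** C + B ** (C::'n::finite op)"
  by (vector matrix_matrix_mult_def sum.distrib[symmetric] field_simps)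

lemma matrix_diff_rdistrib: "(A - B) ** C = A ** C - B ** (C::'n::finite op)"
  by (vector matrix_matrix_mult_def sum_subtractf[symmetric] field_simps)

lemma matrix_diff_ldistrib: "C ** (A - B) = C ** A - C ** (B::'n::finite op)"
  by (vector matrix_matrix_mult_def sum_subtractf[symmetric] field_simps)

lemma matrix_uminus_left [simp]: "(- A) ** C = - (A ** (C::'n::finite op))"
  by (vector matrix_matrix_mult_def sum_negf[symmetric])

lemma matrix_uminus_right [simp]: "C ** (- A) = - (C ** (A::'n::finite op))"
  by (vector matrix_matrix_mult_def sum_negf[symmetric])

lemma matrix_sum_left: "(\<Sum>a\<in>S. f a) ** (C::'n::finite op) = (\<Sum>a\<in>S. f a ** C)"
  by (induction S rule: infinite_finite_induct) (auto simp: matrix_add_rdistrib)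

lemma matrix_sum_right: "(C::'n::finite op) ** (\<Sum>a\<in>S. f a) = (\<Sum>a\<in>S. C ** f a)"
  by (induction S rule: infinite_finite_induct) (auto simp: matrix_add_ldistrib)

lemma matrix_vector_sum_left: "(\<Sum>a\<in>S. f a) *v (v::complex^'n::finite) = (\<Sum>a\<in>S. f a *v v)"
  by (induction S rule: infinite_finite_induct) (auto simp: matrix_vector_mult_add_rdistrib)

text \<open>Scalars \<open>c\<close> are represented by the operators \<open>mat c\<close>, which are central.\<close>

lemma mat_nth_mult: "(mat c ** A) $ i $ j = c * A $ i $ j"
  by (simp add: matrix_matrix_mult_def mat_def if_distrib if_distribR sum.delta cong: if_cong)

lemma mat_nth_mult_right: "(A ** mat c) $ i $ j = A $ i $ j * c"
  by (simp add: matrix_matrix_mult_def mat_def if_distrib if_distribR sum.delta' cong: if_cong)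

lemma mat_mult_comm: "mat c ** A = A ** (mat c :: 'n::finite op)"
  by (simp add: vec_eq_iff mat_nth_mult mat_nth_mult_right mult.commute)

lemma mat_mult_mat [simp]: "mat a ** mat b = (mat (a * b) :: 'n::finite op)"
  by (simp add: vec_eq_iff mat_nth_mult) (simp add: mat_def)

lemma mat_mult_mat_left: "mat a ** (mat b ** A) = (mat (a * b) ** A :: 'n::finite op)"
  by (simp add: matrix_mul_assoc)

lemma mat_add: "mat a + mat b = (mat (a + b) :: 'n::finite op)"
  by (simp add: mat_def vec_eq_iff)

lemma mat_neg_mult: "mat (- c) ** Y = - (mat c ** (Y::'n::finite op))"
  by (simp add: vec_eq_iff mat_nth_mult)

lemma mat_mult_assoc_comm: "A ** (mat c ** B) = mat c ** (A ** (B::'n::finite op))"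
  by (metis mat_mult_comm matrix_mul_assoc)

lemma sandwich_mat:
  fixes P Q X :: "'n::finite op"
  shows "P ** (mat c ** X) ** Q = mat c ** (P ** X ** Q)"
  by (simp only: mat_mult_assoc_comm) (simp add: matrix_mul_assoc)

lemma cscale_mat: "cscale c A = mat c ** (A::'n::finite op)"
  by (simp add: cscale_def vec_eq_iff mat_nth_mult)

lemma scaleR_mat: "r *\<^sub>R (A::'n::finite op) = mat (of_real r) ** A"
  unfolding vec_eq_iff by (simp add: mat_nth_mult) (metis scaleR_conv_of_real)

lemma scaleR_mat_comm: "r *\<^sub>R (mat c ** Y) = mat c ** (r *\<^sub>R (Y::'n::finite op))"
  unfolding vec_eq_iff by (simp add: mat_nth_mult)

lemma adj_scaleR: "adj (r *\<^sub>R M) = r *\<^sub>R adj (M::'n::finite op)"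
  by (simp add: scaleR_mat adj_mult mat_mult_comm)

lemma mat_1_neq_0: "(mat 1 :: 'n::finite op) \<noteq> 0"
proof
  assume "(mat 1 :: 'n op) = 0"
  then have "(mat 1 :: 'n op) $ undefined $ undefined = 0" by simp
  then show False by (simp add: mat_def)
qed

lemma sandwich_linear:
  fixes P Q :: "'n::finite op"
  shows "linear (\<lambda>Y::'n op. P ** Y ** Q)"
  by (rule linearI) (simp_all add: matrix_add_ldistrib matrix_add_rdistrib scaleR_mat
      mat_mult_assoc_comm matrix_mul_assoc[symmetric])

lemma orth_projD: "orth_proj P \<Longrightarrow> adj P = P" "orth_proj P \<Longrightarrow> P ** P = P"
  by (simp_all add: orth_proj_def)

lemma proj_idem_right: "orth_proj Q \<Longrightarrow> Z ** Q ** Q = Z ** Q"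
  by (metis matrix_mul_assoc orth_projD(2))

definition herm_part :: "'n::finite op \<Rightarrow> 'n op" where
  "herm_part Y = mat (1/2) ** (Y + adj Y)"

definition aherm_part :: "'n::finite op \<Rightarrow> 'n op" where
  "aherm_part Y = mat (- \<i>/2) ** (Y - adj Y)"

lemma herm_part_herm: "herm_part Y = adj (herm_part Y)"
  unfolding herm_part_def by (simp add: adj_mult mat_mult_comm add.commute)

lemma aherm_part_herm: "aherm_part Y = adj (aherm_part Y)"
proof -
  have "adj (aherm_part Y) = (adj Y - Y) ** mat (\<i>/2)" unfolding aherm_part_def by (simp add: adj_mult)
  also have "\<dots> = aherm_part Y"
    by (simp add: aherm_part_def mat_mult_comm[symmetric] matrix_diff_ldistrib mat_neg_mult)
  finally show ?thesis by simp
qed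

lemma herm_decomp: "Y = herm_part Y + mat \<i> ** aherm_part Y"
proof -
  have "herm_part Y + mat \<i> ** aherm_part Y = mat (1/2) ** (Y + adj Y) + mat (1/2) ** (Y - adj Y)"
    unfolding herm_part_def aherm_part_def by (simp add: matrix_mul_assoc)
  also have "\<dots> = mat (1/2) ** (Y + Y)"
    by (simp add: matrix_add_ldistrib[symmetric])
  also have "\<dots> = Y" by (simp only: matrix_add_ldistrib matrix_add_rdistrib[symmetric] mat_add) simp
  finally show ?thesis by simp
qed

text \<open>The kernel of a complex-linear map commuting with \<open>adj\<close> is closed under taking
  hermitian parts; so to show it is small it suffices to look at hermitian elements.\<close>

lemma kernel_herm_parts:
  fixes F :: "'n::finite op \<Rightarrow> 'n op"
  assumes add: "\<And>X Y. F (X + Y) = F X + F Y" and scal: "\<And>c X. F (mat c ** X) = mat c ** F X"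
    and adjF: "\<And>X. F (adj X) = adj (F X)" and Y: "F Y = 0"
  shows "F (herm_part Y) = 0" "F (aherm_part Y) = 0"
proof -
  have diff: "F (X - Z) = F X - F Z" for X Z
    using add[of "X - Z" Z] by simp
  show "F (herm_part Y) = 0" "F (aherm_part Y) = 0"
    unfolding herm_part_def aherm_part_def by (simp_all add: scal add diff adjF Y)
qed

lemma herm_parts_sandwich:
  assumes "adj P = P" and "Z = P ** Z ** P"
  shows "herm_part Z = P ** herm_part Z ** P" "aherm_part Z = P ** aherm_part Z ** P"
proof -
  have aZ: "adj Z = P ** adj Z ** P"
    using arg_cong[OF assms(2), of adj] by (simp add: adj_mult assms(1) matrix_mul_assoc)
  show "herm_part Z = P ** herm_part Z ** P" "aherm_part Z = P ** aherm_part Z ** P"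
    unfolding herm_part_def aherm_part_def sandwich_mat
    by (simp_all add: matrix_add_ldistrib matrix_add_rdistrib matrix_diff_ldistrib
        matrix_diff_rdistrib assms(2)[symmetric] aZ[symmetric])
qed

section \<open>Trace and the Hilbert-Schmidt pairing\<close>

lemma trace_add [simp]: "trace_op (A + B) = trace_op A + trace_op B"
  by (simp add: trace_op_def sum.distrib)

lemma trace_diff [simp]: "trace_op (A - B) = trace_op A - trace_op B"
  by (simp add: trace_op_def sum_subtractf)

lemma trace_zero [simp]: "trace_op 0 = 0"
  by (simp add: trace_op_def)

lemma trace_sum: "trace_op (\<Sum>a\<in>S. f a) = (\<Sum>a\<in>S. trace_op (f a))"
  by (induction S rule: infinite_finite_induct) auto

lemma trace_comm: "trace_op (A ** B) = trace_op (B ** (A::'n::finite op))"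
  unfolding trace_op_def matrix_matrix_mult_def
  by (simp, subst sum.swap, simp add: mult.commute)

lemma trace_rot:
  fixes A B C :: "'n::finite op"
  shows "trace_op (A ** B ** C) = trace_op (C ** A ** B)"
  by (simp add: trace_comm[of "A ** B" C] matrix_mul_assoc)

lemma trace_sandwich:
  fixes B X Y :: "'n::finite op"
  shows "trace_op (adj Y ** (B ** X ** adj B)) = trace_op (adj (adj B ** Y ** B) ** X)"
  by (simp add: adj_mult matrix_mul_assoc trace_comm[of "adj Y ** B ** X" "adj B"])

lemma trace_mat_mult: "trace_op (mat c ** A) = c * trace_op A"
  by (simp add: trace_op_def mat_nth_mult sum_distrib_left)

lemma trace_adj: "trace_op (adj A) = cnj (trace_op A)"
  by (simp add: trace_op_def)

lemma trace_scaleR: "trace_op (r *\<^sub>R A) = of_real r * trace_op A"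
  by (simp add: scaleR_mat trace_mat_mult)

text \<open>The Hilbert-Schmidt pairing \<open>\<langle>A, B\<rangle> = tr (A\<^sup>\<dagger> B)\<close>; its real part is the euclidean
  inner product on \<open>complex^'n^'n\<close>, which links it to the linear algebra of the library.\<close>

definition hs :: "'n::finite op \<Rightarrow> 'n op \<Rightarrow> complex" where
  "hs A B = trace_op (adj A ** B)"

lemma hs_expand: "hs A B = (\<Sum>i\<in>UNIV. \<Sum>k\<in>UNIV. cnj (A $ k $ i) * B $ k $ i)"
  by (simp add: hs_def trace_op_def matrix_matrix_mult_def)

lemma inner_op: "inner A B = Re (hs A B)"
  unfolding hs_expand inner_vec_def
  by (subst sum.swap) (simp add: Re_sum inner_complex_def)

lemma hs_cnj: "cnj (hs A B) = hs B A"
  by (simp add: hs_expand mult.commute)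

lemma hs_self: "hs A A = of_real (norm A ^ 2)"
proof -
  have "Im (hs A A) = 0" by (simp add: hs_expand Im_sum mult.commute)
  then have "hs A A = of_real (inner A A)" by (simp add: inner_op complex_eq_iff)
  then show ?thesis by (simp add: power2_norm_eq_inner)
qed

lemma trace_hs_self: "trace_op (adj W ** W) = of_real (norm W ^ 2)"
  by (metis hs_def hs_self)

lemma hs_add_left: "hs (X + Y) Z = hs X Z + hs Y Z"
  by (simp add: hs_def matrix_add_rdistrib)
lemma hs_add_right: "hs Z (X + Y) = hs Z X + hs Z Y"
  by (simp add: hs_def matrix_add_ldistrib)
lemma hs_diff_left: "hs (X - Y) Z = hs X Z - hs Y Z"
  by (simp add: hs_def matrix_diff_rdistrib)
lemma hs_diff_right: "hs Z (X - Y) = hs Z X - hs Z Y"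
  by (simp add: hs_def matrix_diff_ldistrib)
lemma hs_mat_left: "hs (mat c ** X) Y = cnj c * hs X Y"
  by (simp add: hs_def adj_mult mat_mult_comm[symmetric] matrix_mul_assoc[symmetric] trace_mat_mult)
lemma hs_mat_right: "hs X (mat c ** Y) = c * hs X Y"
  by (simp add: hs_def mat_mult_assoc_comm trace_mat_mult)

lemma hs_zero_left [simp]: "hs 0 Y = 0"
  by (simp add: hs_def)
lemma hs_zero_right [simp]: "hs Y 0 = 0"
  by (simp add: hs_def)

lemma hs_sandwich:
  fixes P Q X Y :: "'n::finite op"
  assumes "adj P = P" "adj Q = Q"
  shows "hs (P ** X ** Q) Y = hs X (P ** Y ** Q)"
proof -
  have "hs (P ** X ** Q) Y = trace_op (Q ** (adj X ** P ** Y))"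
    using assms by (simp add: hs_def adj_mult matrix_mul_assoc)
  also have "\<dots> = trace_op ((adj X ** P ** Y) ** Q)" by (rule trace_comm)
  also have "\<dots> = hs X (P ** Y ** Q)" by (simp add: hs_def matrix_mul_assoc)
  finally show ?thesis .
qed

lemma trace_proj_nonzero:
  assumes "orth_proj P" "P \<noteq> 0" shows "trace_op P \<noteq> 0"
  using assms trace_hs_self[of P] by (simp add: orth_projD)

text \<open>A linear map on a finite-dimensional space whose adjoint is injective is itself
  injective (both are then bijective).\<close>

lemma inj_from_adj:
  fixes F G :: "'n::finite op \<Rightarrow> 'n op"
  assumes lin: "linear F" and adjFG: "\<And>X Y. hs (F X) Y = hs X (G Y)" and ig: "inj G"
  shows "inj F"
proof -
  have aG: "adjoint F = G"
    by (rule adjoint_unique) (simp add: inner_op adjFG)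
  have "linear G" using adjoint_linear[OF lin] aG by simp
  then have "surj G" using ig by (simp add: linear_injective_imp_surjective)
  then show ?thesis using lin aG linear_surj_adj_imp_inj by metis
qed

lemma linear_inj_iff: "linear F \<Longrightarrow> inj F \<longleftrightarrow> (\<forall>x. F x = 0 \<longrightarrow> x = 0)"
  by (simp add: linear_injective_0)

section \<open>Vectors and positive semidefinite operators\<close>

definition cinner :: "complex^'n::finite \<Rightarrow> complex^'n \<Rightarrow> complex" where
  "cinner v w = (\<Sum>i\<in>UNIV. cnj (v $ i) * w $ i)"

lemma cinner_adj: "cinner v (A *v w) = cinner (adj A *v v) w"
  unfolding cinner_def matrix_vector_mult_def
  by (simp add: sum_distrib_left sum_distrib_right mult_ac) (subst sum.swap, simp)

lemma cinner_cnj: "cnj (cinner v w) = cinner w v"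
  by (simp add: cinner_def mult.commute)

lemma Re_cinner: "Re (cinner v w) = inner v w"
  by (simp add: cinner_def inner_vec_def Re_sum inner_complex_def)

lemma cinner_self: "cinner v v = of_real (norm v ^ 2)"
proof -
  have "Im (cinner v v) = 0" by (simp add: cinner_def Im_sum mult.commute)
  then show ?thesis by (simp add: complex_eq_iff power2_norm_eq_inner Re_cinner)
qed

lemma cinner_self_zero: "cinner v v = 0 \<longleftrightarrow> v = 0"
  by (simp add: cinner_self)

lemma cinner_add_left: "cinner (u + v) w = cinner u w + cinner v w"
  by (simp add: cinner_def sum.distrib distrib_right)
lemma cinner_add_right: "cinner w (u + v) = cinner w u + cinner w v"
  by (simp add: cinner_def sum.distrib distrib_left)
lemma cinner_diff_left: "cinner (u - v) w = cinner u w - cinner v w"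
  by (simp add: cinner_def sum_subtractf left_diff_distrib)
lemma cinner_diff_right: "cinner w (u - v) = cinner w u - cinner w v"
  by (simp add: cinner_def sum_subtractf right_diff_distrib)
lemma cinner_uminus_right: "cinner v (- w) = - cinner v w"
  by (simp add: cinner_def sum_negf)
lemma cinner_scale_left: "cinner (c *s v) w = cnj c * cinner v w"
  by (simp add: cinner_def sum_distrib_left mult_ac)
lemma cinner_scale_right: "cinner v (c *s w) = c * cinner v w"
  by (simp add: cinner_def sum_distrib_left mult_ac)
lemma cinner_zero_left [simp]: "cinner 0 w = 0"
  by (simp add: cinner_def)
lemma cinner_zero_right [simp]: "cinner w 0 = 0"
  by (simp add: cinner_def)
lemma cinner_sum_right: "cinner v (\<Sum>a\<in>I. f a) = (\<Sum>a\<in>I. cinner v (f a))"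
  by (induction I rule: infinite_finite_induct) (auto simp: cinner_add_right)

lemma Im_cinner: "Im (cinner v w) = inner (\<i> *s v) w"
  by (simp add: Re_cinner[symmetric] cinner_scale_left)

lemma cinner_ext: "(\<And>w. cinner w a = cinner w b) \<Longrightarrow> a = (b::complex^'n::finite)"
  by (metis cinner_diff_right cinner_self_zero eq_iff_diff_eq_0)

lemma scaleR_vec_eq: "r *\<^sub>R (v::complex^'n::finite) = of_real r *s v"
  unfolding vec_eq_iff by simp (metis scaleR_conv_of_real)

lemma matrix_vector_scale: "A *v (c *s v) = c *s (A *v (v::complex^'n::finite))"
  by (simp add: matrix_vector_mult_def vec_eq_iff sum_distrib_left mult_ac)

lemma mat_vector_mult: "mat c *v (v::complex^'n::finite) = c *s v"
  by (simp add: matrix_vector_mult_def vec_eq_iff mat_def if_distrib if_distribR sum.delta cong: if_cong)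

lemma mv_uminus: "(- M) *v v = - (M *v (v::complex^'n::finite))"
  by (simp add: matrix_vector_mult_def vec_eq_iff sum_negf)

lemma mv_scaleR: "A *v (r *\<^sub>R x) = r *\<^sub>R (A *v (x::complex^'n::finite))"
  by (simp add: scaleR_vec_eq matrix_vector_scale)

lemma mv_scaleR_left: "(r *\<^sub>R (M::'n::finite op)) *v v = of_real r *s (M *v v)"
  by (simp add: scaleR_mat matrix_vector_mul_assoc[symmetric] mat_vector_mult)

lemma cinner_scaleR_quad: "cinner (r *\<^sub>R u) (M *v (r *\<^sub>R u)) = of_real (r^2) * cinner u (M *v u)"
  by (simp add: scaleR_vec_eq matrix_vector_scale cinner_scale_left cinner_scale_right power2_eq_square)

lemma quad_min_scale:
  assumes "\<And>v. norm v = 1 \<Longrightarrow> m \<le> Re (cinner v (Y *v v))"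
  shows "m * norm u ^ 2 \<le> Re (cinner u (Y *v (u::complex^'n::finite)))"
proof (cases "u = 0")
  case True then show ?thesis by simp
next
  case False
  define v where "v = (1 / norm u) *\<^sub>R u"
  have "norm v = 1" using False by (simp add: v_def)
  then have "m \<le> Re (cinner v (Y *v v))" by (rule assms)
  also have "Re (cinner v (Y *v v)) = (1 / norm u)^2 * Re (cinner u (Y *v u))"
    unfolding v_def cinner_scaleR_quad by simp
  finally show ?thesis using False by (simp add: field_simps)
qed

lemma psd_op_iff: "psd_op A \<longleftrightarrow> A = adj A \<and> (\<forall>v. 0 \<le> Re (cinner v (A *v v)))"
  by (simp add: psd_op_def cinner_def)

lemma real_quad_zero:
  fixes a b :: real
  assumes "\<And>t. 0 \<le> a * t + b * t^2"
  shows "a = 0"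
proof (rule ccontr)
  assume a: "a \<noteq> 0"
  define c where "c = \<bar>b\<bar> + 1"
  have cpos: "c > 0" unfolding c_def by simp
  define t where "t = - a / (2 * c)"
  have e: "a * t + b * t^2 = a^2 * (b - 2*c) / (4*c^2)"
    unfolding t_def using cpos by (simp add: field_simps power2_eq_square)
  have "b - 2*c < 0" unfolding c_def by (cases "b \<ge> 0") auto
  moreover have "a^2 > 0" using a by simp
  ultimately have "a^2 * (b - 2*c) < 0" by (simp add: mult_pos_neg)
  then have "a * t + b * t^2 < 0" unfolding e using cpos by (simp add: divide_neg_pos)
  with assms[of t] show False by simp
qed

lemma psd_kernel:
  assumes psd: "psd_op A" and z: "Re (cinner v (A *v v)) = 0"
  shows "A *v v = 0"
proof -
  have herm: "A = adj A" using psd by (simp add: psd_op_iff)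
  let ?w = "A *v v"
  have "0 \<le> 2 * Re (cinner ?w (A *v v)) * t + Re (cinner ?w (A *v ?w)) * t^2" for t :: real
  proof -
    let ?u = "v + of_real t *s ?w"
    have "0 \<le> Re (cinner ?u (A *v ?u))" using psd by (simp add: psd_op_iff)
    also have "cinner ?u (A *v ?u) = cinner v (A *v v) + of_real t * cinner v (A *v ?w)
        + of_real t * cinner ?w (A *v v) + of_real t * of_real t * cinner ?w (A *v ?w)"
      by (simp add: matrix_vector_right_distrib matrix_vector_scale cinner_add_left cinner_add_right
          cinner_scale_left cinner_scale_right algebra_simps)
    also have "cinner v (A *v ?w) = cnj (cinner ?w (A *v v))"
      by (metis cinner_adj cinner_cnj herm)
    finally show ?thesis using z by (simp add: power2_eq_square ac_simps)
  qed
  then have "2 * Re (cinner ?w (A *v v)) = 0" by (rule real_quad_zero)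
  then have "cinner ?w ?w = 0"
    by (simp add: cinner_self)
  then show ?thesis by (simp add: cinner_self_zero)
qed

lemma psd_adj_mult: "psd_op (adj M ** M)"
  unfolding psd_op_iff
  by (simp add: adj_mult matrix_vector_mul_assoc[symmetric] cinner_adj cinner_self)

lemma psd_add: "psd_op X \<Longrightarrow> psd_op Y \<Longrightarrow> psd_op (X + Y)"
  unfolding psd_op_iff
  by (simp add: matrix_vector_mult_add_rdistrib cinner_add_right)

lemma psd_zero: "psd_op 0"
  by (simp add: psd_op_iff)

lemma psd_sum: "(\<And>a. a \<in> S \<Longrightarrow> psd_op (f a)) \<Longrightarrow> psd_op (\<Sum>a\<in>S. f a)"
  by (induction S rule: infinite_finite_induct) (auto simp: psd_zero psd_add)

lemma psd_scaleR: "psd_op M \<Longrightarrow> 0 \<le> r \<Longrightarrow> psd_op (r *\<^sub>R M)"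
  unfolding psd_op_iff
  by (auto simp: scaleR_mat adj_mult mat_mult_comm matrix_vector_mul_assoc[symmetric] mat_vector_mult
      cinner_scale_right matrix_vector_scale)

lemma sum_adj_mult_zero:
  assumes "finite S" "(\<Sum>a\<in>S. adj (M a) ** M a) = 0" "a \<in> S"
  shows "M a = 0"
proof -
  have "of_real (\<Sum>a\<in>S. norm (M a) ^ 2) = trace_op (\<Sum>a\<in>S. adj (M a) ** M a)"
    by (simp add: trace_sum trace_hs_self)
  then have "(\<Sum>a\<in>S. norm (M a) ^ 2) = 0" using assms(2) by (metis of_real_eq_0_iff trace_zero)
  then have "norm (M a) ^ 2 = 0" using assms by (simp add: sum_nonneg_eq_0_iff)
  then show ?thesis by simp
qed

lemma max_form_gap:
  assumes P: "orth_proj P" and Zh: "Z = adj Z" and ZP: "Z = P ** Z ** P"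
    and bound: "\<And>v. P *v v = v \<Longrightarrow> norm v = 1 \<Longrightarrow> Re (cinner v (Z *v v)) \<le> l"
  shows "psd_op (mat (of_real l) ** P - Z)"
proof -
  have aP: "adj P = P" "P ** P = P" using P by (simp_all add: orth_projD)
  have PPv: "P *v (P *v u) = P *v u" for u by (simp add: matrix_vector_mul_assoc aP)
  define Y where "Y = mat (of_real l) ** P - Z"
  have Yh: "Y = adj Y" using Zh aP unfolding Y_def by (simp add: adj_mult mat_mult_comm)
  have YP: "Y = P ** Y ** P"
    unfolding Y_def by (simp add: matrix_diff_ldistrib matrix_diff_rdistrib sandwich_mat aP ZP[symmetric])
  have Pu: "cinner w (Y *v w) = cinner (P *v w) (Y *v (P *v w))" for w
  proof -
    have "cinner w (Y *v w) = cinner w (P *v (Y *v (P *v w)))"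
      by (subst YP) (simp add: matrix_vector_mul_assoc matrix_mul_assoc)
    also have "\<dots> = cinner (P *v w) (Y *v (P *v w))" by (simp add: cinner_adj aP)
    finally show ?thesis .
  qed
  have "0 \<le> Re (cinner w (Y *v w))" for w
  proof (cases "P *v w = 0")
    case True then show ?thesis using Pu[of w] by simp
  next
    case False
    let ?u = "P *v w"
    define v where "v = (1 / norm ?u) *\<^sub>R ?u"
    have e: "Re (cinner v (Z *v v)) = (1 / norm ?u)^2 * Re (cinner ?u (Z *v ?u))"
      unfolding v_def cinner_scaleR_quad by simp
    have "Re (cinner ?u (Z *v ?u)) = Re (cinner v (Z *v v)) * norm ?u ^ 2"
      using e False by (simp add: field_simps)
    also have "\<dots> \<le> l * norm ?u ^ 2"
      using False by (intro mult_right_mono bound) (simp_all add: v_def mv_scaleR PPv)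
    finally have "Re (cinner ?u (Z *v ?u)) \<le> l * norm ?u ^ 2" .
    then show ?thesis unfolding Pu[of w]
      by (simp add: Y_def PPv matrix_vector_mult_diff_rdistrib matrix_vector_mul_assoc[symmetric]
          mat_vector_mult cinner_diff_right cinner_scale_right cinner_self)
  qed
  then show ?thesis using Yh by (simp add: psd_op_iff Y_def)
qed

lemma top_eigen_gap:
  assumes P: "orth_proj P" and Pne: "P \<noteq> 0" and Zh: "Z = adj Z" and ZP: "Z = P ** Z ** P"
  obtains l :: real and v0 :: "complex^'n::finite" where "P *v v0 = v0" "v0 \<noteq> 0"
    "psd_op (mat (of_real l) ** P - Z)" "(mat (of_real l) ** P - Z) *v v0 = 0"
proof -
  have PPv: "P *v (P *v u) = P *v u" for u using P by (simp add: matrix_vector_mul_assoc orth_projD)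
  let ?F = "\<lambda>v. Re (cinner v (Z *v v))"
  let ?T = "{v. P *v v = v} \<inter> sphere (0::complex^'n) 1"
  have cT: "compact ?T"
    by (intro closed_Int_compact compact_sphere closed_Collect_eq) (auto intro: continuous_intros)
  obtain u where u: "P *v u \<noteq> 0" using Pne matrix_eq[of P 0] by auto
  then have "(1 / norm (P *v u)) *\<^sub>R (P *v u) \<in> ?T" by (simp add: mv_scaleR PPv)
  then have neT: "?T \<noteq> {}" by blast
  have contF: "continuous_on ?T ?F"
    unfolding cinner_def by (intro continuous_intros)
  obtain v0 where v0: "P *v v0 = v0" "norm v0 = 1" and v0max: "\<And>v. v \<in> ?T \<Longrightarrow> ?F v \<le> ?F v0"
    using continuous_attains_sup[OF cT neT contF] by auto
  define Y where "Y = mat (of_real (?F v0)) ** P - Z"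
  have psdY: "psd_op Y"
    unfolding Y_def by (rule max_form_gap[OF P Zh ZP]) (simp add: v0max)
  have "cinner v0 (Y *v v0) = of_real (?F v0) - cinner v0 (Z *v v0)"
    using v0 by (simp add: Y_def matrix_vector_mult_diff_rdistrib matrix_vector_mul_assoc[symmetric]
        mat_vector_mult cinner_diff_right cinner_scale_right cinner_self)
  then have "Re (cinner v0 (Y *v v0)) = 0" by simp
  then have "Y *v v0 = 0" using psd_kernel[OF psdY] by blast
  with v0 psdY show ?thesis by (intro that[of v0 "?F v0"]) (auto simp: Y_def)
qed

lemma bottom_eigenvector:
  assumes Yh: "Y = adj Y"
  obtains \<mu> :: real and v0 :: "complex^'n::finite" where "norm v0 = 1" "Y *v v0 = of_real \<mu> *s v0"
    "\<And>u. \<mu> * norm u ^ 2 \<le> Re (cinner u (Y *v u))"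
proof -
  let ?F = "\<lambda>v. Re (cinner v (Y *v v))"
  have c: "continuous_on (sphere 0 1) ?F"
    unfolding cinner_def matrix_vector_mult_def by (intro continuous_intros)
  obtain v0 where v0: "v0 \<in> sphere (0::complex^'n) 1" and v0min: "\<And>v. v \<in> sphere 0 1 \<Longrightarrow> ?F v0 \<le> ?F v"
    using continuous_attains_inf[OF compact_sphere _ c] by auto
  define \<mu> where "\<mu> = ?F v0"
  have Fge: "\<mu> * norm u ^ 2 \<le> ?F u" for u
    by (rule quad_min_scale) (use v0min in \<open>auto simp: \<mu>_def\<close>)
  have nv0: "norm v0 = 1" using v0 by simp
  define Y' where "Y' = Y - mat (of_real \<mu>)"
  have quad: "cinner u (Y' *v u) = cinner u (Y *v u) - of_real \<mu> * cinner u u" for u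
    by (simp add: Y'_def matrix_vector_mult_diff_rdistrib mat_vector_mult cinner_diff_right cinner_scale_right)
  have psdY': "psd_op Y'"
    unfolding psd_op_iff
  proof (intro conjI allI)
    show "Y' = adj Y'" using Yh by (simp add: Y'_def)
    show "0 \<le> Re (cinner u (Y' *v u))" for u using Fge[of u] by (simp add: quad cinner_self)
  qed
  have "Re (cinner v0 (Y' *v v0)) = 0" using nv0 by (simp add: quad cinner_self \<mu>_def)
  then have "Y' *v v0 = 0" using psd_kernel[OF psdY'] by blast
  then have "Y *v v0 = of_real \<mu> *s v0"
    by (simp add: Y'_def matrix_vector_mult_diff_rdistrib mat_vector_mult)
  then show ?thesis using that[OF nv0 _ Fge] by blast
qed

section \<open>Orthogonal projections onto complex subspaces\<close>

definition csub :: "(complex^'n::finite) set \<Rightarrow> bool" where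
  "csub E \<longleftrightarrow> 0 \<in> E \<and> (\<forall>x\<in>E. \<forall>y\<in>E. x + y \<in> E) \<and> (\<forall>c. \<forall>x\<in>E. c *s x \<in> E)"

lemma csub_subspace: "csub E \<Longrightarrow> subspace E"
  unfolding csub_def subspace_def by (simp add: scaleR_vec_eq)

lemma csub_diff: "csub E \<Longrightarrow> x \<in> E \<Longrightarrow> y \<in> E \<Longrightarrow> x - y \<in> E"
  using csub_subspace subspace_diff by blast

lemma proj_fun_exists:
  assumes E: "csub E"
  shows "\<exists>y\<in>E. \<forall>w\<in>E. cinner w (x - y) = 0"
proof -
  have sE: "span E = E" using csub_subspace[OF E] by (simp add: span_eq_iff)
  obtain y z where y: "y \<in> span E" and z: "\<And>w. w \<in> span E \<Longrightarrow> orthogonal z w" and xyz: "x = y + z"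
    using orthogonal_subspace_decomp_exists[of E x] by blast
  have "cinner w (x - y) = 0" if w: "w \<in> E" for w
  proof -
    have "x - y = z" using xyz by simp
    moreover have "inner w z = 0" using z w sE by (simp add: orthogonal_def inner_commute)
    moreover have "\<i> *s w \<in> E" using E w by (simp add: csub_def)
    then have "inner (\<i> *s w) z = 0" using z sE by (metis orthogonal_def inner_commute)
    ultimately show ?thesis by (simp add: complex_eq_iff Re_cinner Im_cinner)
  qed
  then show ?thesis using y sE by auto
qed

lemma proj_unique:
  assumes E: "csub E" and "y \<in> E" "\<forall>w\<in>E. cinner w (x - y) = 0"
    and "y' \<in> E" "\<forall>w\<in>E. cinner w (x - y') = 0"
  shows "y = y'"
proof -
  have d: "y' - y \<in> E" using assms csub_diff by blast
  have "cinner (y' - y) (y' - y) = cinner (y' - y) ((x - y) - (x - y'))" by simp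
  also have "\<dots> = 0" using assms d by (simp add: cinner_diff_right)
  finally show ?thesis by (simp add: cinner_self_zero)
qed

definition orth_proj_fun :: "(complex^'n::finite) set \<Rightarrow> complex^'n \<Rightarrow> complex^'n" where
  "orth_proj_fun E x = (SOME y. y \<in> E \<and> (\<forall>w\<in>E. cinner w (x - y) = 0))"

lemma orth_proj_fun:
  assumes E: "csub E"
  shows "orth_proj_fun E x \<in> E \<and> (\<forall>w\<in>E. cinner w (x - orth_proj_fun E x) = 0)"
proof -
  have "\<exists>y. y \<in> E \<and> (\<forall>w\<in>E. cinner w (x - y) = 0)" using proj_fun_exists[OF E, of x] by blast
  then show ?thesis unfolding orth_proj_fun_def by (rule someI_ex)
qed

lemma orth_proj_fun_eq:
  assumes E: "csub E" and "y \<in> E" "\<forall>w\<in>E. cinner w (x - y) = 0"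
  shows "orth_proj_fun E x = y"
  using proj_unique[OF E assms(2,3)] orth_proj_fun[OF E] by metis

lemma orth_proj_fun_linear:
  fixes E :: "(complex^'n::finite) set"
  assumes E: "csub E"
  shows "Vector_Spaces.linear (*s) (*s) (orth_proj_fun E)"
proof unfold_locales
  let ?p = "orth_proj_fun E"
  note p = orth_proj_fun[OF E]
  fix x y :: "complex^'n" and c :: complex
  have "?p x + ?p y \<in> E" using p E by (simp add: csub_def)
  moreover have "\<forall>w\<in>E. cinner w (x + y - (?p x + ?p y)) = 0"
  proof
    fix w assume "w \<in> E"
    then have "cinner w (x - ?p x) + cinner w (y - ?p y) = 0" using p by simp
    then show "cinner w (x + y - (?p x + ?p y)) = 0"
      by (simp add: cinner_add_right[symmetric] algebra_simps)
  qed
  ultimately show "?p (x + y) = ?p x + ?p y" by (rule orth_proj_fun_eq[OF E])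
  have "c *s ?p x \<in> E" using p E by (simp add: csub_def)
  moreover have "\<forall>w\<in>E. cinner w (c *s x - c *s ?p x) = 0"
  proof
    fix w assume "w \<in> E"
    then have "c * cinner w (x - ?p x) = 0" using p by simp
    then show "cinner w (c *s x - c *s ?p x) = 0"
      by (simp add: cinner_scale_right[symmetric] vector_ssub_ldistrib)
  qed
  ultimately show "?p (c *s x) = c *s ?p x" by (rule orth_proj_fun_eq[OF E])
qed

lemma orth_proj_fun_sym:
  assumes E: "csub E"
  shows "cinner u (orth_proj_fun E v) = cinner (orth_proj_fun E u) v"
proof -
  let ?p = "orth_proj_fun E"
  note p = orth_proj_fun[OF E]
  have "cinner u (?p v) = cinner (?p u) (?p v) + cinner (u - ?p u) (?p v)"
    by (simp add: cinner_diff_left)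
  also have "cinner (u - ?p u) (?p v) = cnj (cinner (?p v) (u - ?p u))" by (simp add: cinner_cnj)
  also have "\<dots> = 0" using p by simp
  also have "cinner (?p u) v = cinner (?p u) (?p v) + cinner (?p u) (v - ?p v)"
    by (simp add: cinner_diff_right)
  moreover have "cinner (?p u) (v - ?p v) = 0" using p by simp
  ultimately show ?thesis by simp
qed

lemma proj_onto:
  assumes E: "csub (E::(complex^'n::finite) set)"
  obtains Q where "orth_proj Q" "\<And>v. Q *v v \<in> E" "\<And>v. v \<in> E \<Longrightarrow> Q *v v = v"
proof -
  let ?p = "orth_proj_fun E"
  define Q where "Q = matrix ?p"
  have Qv: "Q *v x = ?p x" for x unfolding Q_def using matrix_works[OF orth_proj_fun_linear[OF E]] .
  have pE: "?p v \<in> E" for v using orth_proj_fun[OF E] by blast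
  have pfix: "?p v = v" if "v \<in> E" for v
    using orth_proj_fun_eq[OF E that] by simp
  have "adj Q = Q"
    unfolding matrix_eq
  proof
    fix u
    show "adj Q *v u = Q *v u"
      by (rule cinner_ext) (simp add: cinner_adj Qv orth_proj_fun_sym[OF E])
  qed
  moreover have "Q ** Q = Q"
    unfolding matrix_eq by (simp add: matrix_vector_mul_assoc[symmetric] Qv pfix pE)
  ultimately have "orth_proj Q" by (simp add: orth_proj_def)
  then show ?thesis using that pE pfix by (simp add: Qv)
qed

section \<open>The density operators of a block form a compact convex set\<close>

lemma axis_cnth: "(axis i (1::complex) :: complex^'n) $ k = (if k = i then 1 else 0)"
  by (simp add: axis_def)

lemma cinner_axis_left: "cinner (axis i 1) (w::complex^'n::finite) = w $ i"
  by (simp add: cinner_def axis_cnth if_distrib if_distribR sum.delta cong: if_cong)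

lemma mv_axis: "(M *v axis j 1) $ i = (M::'n::finite op) $ i $ j"
  by (simp add: matrix_vector_mult_def axis_def if_distrib if_distribR sum.delta' cong: if_cong)

lemma quad_entry: "cinner (axis i 1) (M *v axis j 1) = (M::'n::finite op) $ i $ j"
  by (simp add: cinner_axis_left mv_axis)

lemma psd_diag: assumes "psd_op M" shows "Im (M $ i $ i) = 0" "0 \<le> Re (M $ i $ i)"
proof -
  have h: "M = adj M" using assms by (simp add: psd_op_iff)
  show "Im (M $ i $ i) = 0" using arg_cong[OF h, of "\<lambda>X. X $ i $ i"]
    by (metis adj_nth cnj.sel(2) equation_minus_iff minus_equation_iff neg_equal_zero)
  show "0 \<le> Re (M $ i $ i)" using assms quad_entry[of i M i] by (simp add: psd_op_iff) (metis)
qed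

lemma psd_offdiag:
  assumes psd: "psd_op M"
  shows "cmod (M $ i $ j) \<le> (Re (M $ i $ i) + Re (M $ j $ j)) / 2"
proof (cases "M $ i $ j = 0")
  case True then show ?thesis using psd_diag[OF psd] by simp
next
  case nz: False
  have h: "M = adj M" using psd by (simp add: psd_op_iff)
  have Mji: "M $ j $ i = cnj (M $ i $ j)" using arg_cong[OF h, of "\<lambda>X. X $ j $ i"] by simp
  define a where "a = M $ i $ j"
  define z where "z = - cnj a / of_real (cmod a)"
  have an: "cmod a > 0" using nz by (simp add: a_def)
  have za: "z * a = - of_real (cmod a)"
    using an by (simp add: z_def field_simps complex_norm_square[symmetric] power2_eq_square mult.commute)
  have zz: "cnj z * z = 1"
  proof -
    have "cnj z * z = of_real ((cmod z)^2)" by (metis complex_norm_square mult.commute)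
    moreover have "cmod z = 1" using an by (simp add: z_def norm_divide)
    ultimately show ?thesis by simp
  qed
  let ?w = "axis i 1 + z *s axis j 1 :: complex^_"
  have "cinner ?w (M *v ?w) = M $ i $ i + z * M $ i $ j + cnj z * M $ j $ i + cnj z * z * M $ j $ j"
    by (simp add: matrix_vector_right_distrib matrix_vector_scale cinner_add_left cinner_add_right
        cinner_scale_left cinner_scale_right quad_entry algebra_simps)
  also have "\<dots> = M $ i $ i + M $ j $ j - 2 * of_real (cmod a)"
  proof -
    have "cnj z * M $ j $ i = cnj (z * a)" by (simp add: Mji a_def)
    then have c2: "cnj z * M $ j $ i = - of_real (cmod a)" using za by simp
    have c1: "z * M $ i $ j = - of_real (cmod a)" using za by (simp add: a_def)
    show ?thesis unfolding c1 c2 zz by simp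
  qed
  finally have eqw: "cinner ?w (M *v ?w) = M $ i $ i + M $ j $ j - 2 * of_real (cmod a)" .
  have "0 \<le> Re (cinner ?w (M *v ?w))" using psd by (simp add: psd_op_iff)
  then have "0 \<le> Re (M $ i $ i) + Re (M $ j $ j) - 2 * cmod a" unfolding eqw by simp
  then show ?thesis by (simp add: a_def)
qed

lemma density_entry_bound:
  assumes "psd_op M" "trace_op M = 1"
  shows "cmod (M $ i $ j) \<le> 1"
proof -
  have nn: "\<And>k. 0 \<le> Re (M $ k $ k)" using psd_diag[OF assms(1)] by blast
  have s: "(\<Sum>k\<in>UNIV. Re (M $ k $ k)) = 1" using assms(2) by (simp add: trace_op_def flip: Re_sum)
  have le: "Re (M $ k $ k) \<le> 1" for k
    using member_le_sum[of k UNIV "\<lambda>k. Re (M $ k $ k)"] nn s by simp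
  have "(Re (M $ i $ i) + Re (M $ j $ j)) / 2 \<le> 1" using le[of i] le[of j] by simp
  then show ?thesis using psd_offdiag[OF assms(1), of i j] by (rule_tac order_trans) auto
qed

lemma norm_vec_le_sum: "norm (x::'a::real_normed_vector^'n::finite) \<le> (\<Sum>i\<in>UNIV. norm (x $ i))"
  by (simp add: norm_vec_def L2_set_le_sum)

lemma density_bounded: "bounded {M::'n::finite op. psd_op M \<and> trace_op M = 1}"
proof -
  have "norm M \<le> of_nat (CARD('n) * CARD('n))" if "psd_op M" "trace_op M = 1" for M :: "'n op"
  proof -
    have "norm M \<le> (\<Sum>i\<in>UNIV. norm (M $ i))" by (rule norm_vec_le_sum)
    also have "\<dots> \<le> (\<Sum>i\<in>(UNIV::'n set). \<Sum>j\<in>(UNIV::'n set). norm (M $ i $ j))"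
      by (intro sum_mono norm_vec_le_sum)
    also have "\<dots> \<le> (\<Sum>i\<in>(UNIV::'n set). \<Sum>j\<in>(UNIV::'n set). 1)"
      using density_entry_bound[OF that] by (intro sum_mono) auto
    finally show ?thesis by simp
  qed
  then show ?thesis unfolding bounded_iff by blast
qed

lemma cont_adj: "continuous_on UNIV (adj :: 'n::finite op \<Rightarrow> 'n op)"
  unfolding adj_def by (intro continuous_intros)

lemma closed_psd: "closed {M::'n::finite op. psd_op M}"
proof -
  have "{M::'n op. psd_op M} = {M. M = adj M} \<inter> {M. \<forall>v. 0 \<le> Re (cinner v (M *v v))}"
    by (auto simp: psd_op_iff)
  moreover have "closed {M::'n op. M = adj M}"
    by (rule closed_Collect_eq) (auto intro: continuous_intros cont_adj)
  moreover have "closed {M::'n op. \<forall>v. 0 \<le> Re (cinner v (M *v v))}"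
    unfolding cinner_def matrix_vector_mult_def
    by (intro closed_Collect_all closed_Collect_le) (auto intro!: continuous_intros)
  ultimately show ?thesis by auto
qed

lemma closed_trace1: "closed {M::'n::finite op. trace_op M = 1}"
  unfolding trace_op_def by (rule closed_Collect_eq) (auto intro!: continuous_intros)

lemma closed_block: "closed {M::'n::finite op. M = P ** M ** P}"
  unfolding matrix_matrix_mult_def by (rule closed_Collect_eq) (auto intro!: continuous_intros)

lemma convex_density_block: "convex {M::'n::finite op. psd_op M \<and> trace_op M = 1 \<and> M = P ** M ** P}"
proof (rule convexI)
  fix x y :: "'n op" and u v :: real
  assume x: "x \<in> {M. psd_op M \<and> trace_op M = 1 \<and> M = P ** M ** P}"
    and y: "y \<in> {M. psd_op M \<and> trace_op M = 1 \<and> M = P ** M ** P}"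
    and uv: "0 \<le> u" "0 \<le> v" "u + v = 1"
  have "psd_op (u *\<^sub>R x + v *\<^sub>R y)" using x y uv by (intro psd_add psd_scaleR) auto
  moreover have "trace_op (u *\<^sub>R x + v *\<^sub>R y) = 1"
    using x y uv by (simp add: trace_scaleR) (metis of_real_add of_real_1)
  moreover have "u *\<^sub>R x + v *\<^sub>R y = P ** (u *\<^sub>R x + v *\<^sub>R y) ** P"
    using x y by (simp add: linear_add[OF sandwich_linear] linear_cmul[OF sandwich_linear] del: matrix_mul_assoc)
  ultimately show "u *\<^sub>R x + v *\<^sub>R y \<in> {M. psd_op M \<and> trace_op M = 1 \<and> M = P ** M ** P}" by simp
qed


lemma compact_density_block: "compact {M::'n::finite op. psd_op M \<and> trace_op M = 1 \<and> M = P ** M ** P}"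
proof -
  have "closed {M::'n op. psd_op M \<and> trace_op M = 1 \<and> M = P ** M ** P}"
    unfolding Collect_conj_eq by (intro closed_Int closed_psd closed_trace1 closed_block)
  moreover have "bounded {M::'n op. psd_op M \<and> trace_op M = 1 \<and> M = P ** M ** P}"
    by (rule bounded_subset[OF density_bounded]) auto
  ultimately show ?thesis by (simp add: compact_eq_bounded_closed)
qed

lemma density_block_nonempty:
  assumes P: "orth_proj P" and Pne: "P \<noteq> 0"
  shows "(1 / norm P ^ 2) *\<^sub>R P \<in> {M::'n::finite op. psd_op M \<and> trace_op M = 1 \<and> M = P ** M ** P}"
proof -
  have aP: "adj P = P" "P ** P = P" using P by (simp_all add: orth_projD)
  have "psd_op P" using psd_adj_mult[of P] aP by simp
  moreover have "trace_op P = of_real (norm P ^ 2)" using trace_hs_self[of P] aP by simp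
  ultimately show ?thesis using Pne
    by (simp add: psd_scaleR trace_scaleR linear_cmul[OF sandwich_linear] aP del: matrix_mul_assoc)
qed

section \<open>Symmetries of the generator\<close>

text \<open>\<open>comm_all H h A U\<close>: \<open>U\<close> commutes with the Hamiltonian and with all jump operators
  and their adjoints.  Such operators commute with the generator and its adjoint.\<close>

definition comm_all :: "'n::finite op \<Rightarrow> ('a \<Rightarrow> 'n op) \<Rightarrow> 'a set \<Rightarrow> 'n op \<Rightarrow> bool" where
  "comm_all H h A U \<longleftrightarrow> U ** H = H ** U \<and>
     (\<forall>\<alpha>\<in>A. U ** h \<alpha> = h \<alpha> ** U \<and> U ** adj (h \<alpha>) = adj (h \<alpha>) ** U)"

lemma comm_all_mat: "comm_all H h A (mat c)"
  by (simp add: comm_all_def mat_mult_comm)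

lemma comm_all_herm:
  assumes "P = adj P" "P ** H = H ** P" "\<forall>\<alpha>\<in>A. h \<alpha> ** P = P ** h \<alpha>"
  shows "comm_all H h A P"
  unfolding comm_all_def
proof (intro conjI ballI)
  show "P ** H = H ** P" by fact
  fix \<alpha> assume a: "\<alpha> \<in> A"
  then show "P ** h \<alpha> = h \<alpha> ** P" using assms by simp
  have "adj (h \<alpha> ** P) = adj (P ** h \<alpha>)" using assms a by simp
  then show "P ** adj (h \<alpha>) = adj (h \<alpha>) ** P"
    using assms(1) by (simp add: adj_mult)
qed

lemma comm_all_adj:
  assumes "H = adj H" "comm_all H h A U" shows "comm_all H h A (adj U)"
  using assms unfolding comm_all_def
  by (metis adj_adj adj_mult)

lemma comm_all_mult:
  assumes "comm_all H h A U" "comm_all H h A V" shows "comm_all H h A (U ** V)"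
proof -
  have "U ** V ** X = X ** (U ** V)" if "U ** X = X ** U" "V ** X = X ** V" for X
    by (metis matrix_mul_assoc that)
  then show ?thesis using assms unfolding comm_all_def by blast
qed

lemma comm_all_add:
  assumes "comm_all H h A U" "comm_all H h A V" shows "comm_all H h A (U + V)"
  using assms by (simp add: comm_all_def matrix_add_ldistrib matrix_add_rdistrib)

lemma comm_all_unitary:
  assumes U: "unitary_op U" and UH: "U ** H = H ** U" and Uh: "\<forall>a\<in>A. U ** h a = h a ** U"
  shows "comm_all H h A U"
proof -
  have u1: "adj U ** U = mat 1" and u2: "U ** adj U = mat 1" using U by (simp_all add: unitary_op_def)
  have "U ** adj (h a) = adj (h a) ** U" if a: "a \<in> A" for a
  proof -
    have "adj U ** (U ** h a) ** adj U = adj U ** (h a ** U) ** adj U" using Uh a by simp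
    then have "h a ** adj U = adj U ** h a"
      by (simp add: matrix_mul_assoc u1) (simp add: matrix_mul_assoc[symmetric] u2)
    then show ?thesis using arg_cong[of _ _ adj] by (metis adj_adj adj_mult)
  qed
  then show ?thesis using UH Uh by (simp add: comm_all_def)
qed

lemma symmetry_of_partial_isometry:
  fixes Pi Pj V :: "'n::finite op"
  assumes proj_i: "orth_proj Pi" and proj_j: "orth_proj Pj"
    and sum1: "Pi + Pj = mat 1" and orth: "Pi ** Pj = 0"
    and V: "V = Pi ** V ** Pj" and VV1: "adj V ** V = Pj" and VV2: "V ** adj V = Pi"
  shows "unitary_op (V + adj V) \<and> (V + adj V) ** (V + adj V) = mat 1
      \<and> (V + adj V) ** Pj = Pi ** (V + adj V)"
proof -
  have aPi: "adj Pi = Pi" "Pi ** Pi = Pi" and aPj: "adj Pj = Pj" "Pj ** Pj = Pj"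
    using proj_i proj_j by (simp_all add: orth_projD)
  have orth': "Pj ** Pi = 0" using arg_cong[OF orth, of adj] by (simp add: adj_mult aPi aPj)
  have PiV: "Pi ** V = V" and VPj: "V ** Pj = V" by (metis V aPi(2) aPj(2) matrix_mul_assoc)+
  have VV0: "V ** V = 0" by (metis VPj PiV orth' matrix_mul_assoc times0_left times0_right)
  have aVV0: "adj V ** adj V = 0" using arg_cong[OF VV0, of adj] by (simp add: adj_mult)
  have aVPj: "adj V ** Pj = 0"
    using arg_cong[OF PiV, of adj] orth by (metis adj_mult aPi(1) matrix_mul_assoc times0_right)
  have PiaV: "Pi ** adj V = 0"
    using arg_cong[OF VPj, of adj] orth by (metis adj_mult aPj(1) matrix_mul_assoc times0_left)
  have UU: "(V + adj V) ** (V + adj V) = mat 1"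
    using sum1 by (simp add: matrix_add_ldistrib matrix_add_rdistrib VV0 aVV0 VV1 VV2 add.commute)
  moreover have "adj (V + adj V) = V + adj V" by (simp add: add.commute)
  ultimately have "unitary_op (V + adj V)" by (metis unitary_op_def)
  moreover have "(V + adj V) ** Pj = Pi ** (V + adj V)"
    by (simp add: matrix_add_ldistrib matrix_add_rdistrib VPj PiV aVPj PiaV)
  ultimately show ?thesis using UU by blast
qed

section \<open>The Lindblad generator and its adjoint\<close>

text \<open>Fixed data of the generator: finitely many jump operators and a hermitian Hamiltonian.
  \<open>D\<close> is the generator, \<open>Ds\<close> its adjoint for the Hilbert-Schmidt pairing.\<close>

locale lindblad_gen =
  fixes H :: "'n::finite op" and h :: "'a \<Rightarrow> 'n op" and A :: "'a set"
  assumes finA: "finite A" and herm: "H = adj H"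
begin

definition S :: "'n op" where "S = (\<Sum>\<alpha>\<in>A. adj (h \<alpha>) ** h \<alpha>)"
definition K :: "'n op" where "K = mat (- \<i>) ** H - mat (1/2) ** S"
definition J :: "'n op \<Rightarrow> 'n op" where "J X = (\<Sum>\<alpha>\<in>A. h \<alpha> ** X ** adj (h \<alpha>))"
definition Jd :: "'n op \<Rightarrow> 'n op" where "Jd X = (\<Sum>\<alpha>\<in>A. adj (h \<alpha>) ** X ** h \<alpha>)"
abbreviation D :: "'n op \<Rightarrow> 'n op" where "D \<equiv> lindblad H h A"
definition Ds :: "'n op \<Rightarrow> 'n op" where "Ds X = adj K ** X + X ** K + Jd X"

lemma S_herm: "adj S = S"
  by (simp add: S_def adj_sum adj_mult)

lemma adjK: "adj K = mat \<i> ** H - mat (1/2) ** S"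
  using herm by (simp add: K_def adj_mult S_herm mat_mult_comm)

lemma K_adjK: "K + adj K = - S"
proof -
  have "K + adj K = - (mat (1/2) ** S + mat (1/2) ** S)"
    unfolding adjK unfolding K_def by (simp add: mat_neg_mult algebra_simps)
  also have "mat (1/2) ** S + mat (1/2) ** S = S"
    by (simp add: matrix_add_rdistrib[symmetric] mat_add)
  finally show ?thesis .
qed

lemma D_form: "D X = K ** X + X ** adj K + J X"
proof -
  have 1: "(\<Sum>\<alpha>\<in>A. adj (h \<alpha>) ** h \<alpha> ** X + X ** adj (h \<alpha>) ** h \<alpha>) = S ** X + X ** S"
    by (simp add: S_def sum.distrib matrix_sum_left matrix_sum_right matrix_mul_assoc)
  have "D X = mat (- \<i>) ** (H ** X - X ** H) + (J X - mat (1/2) ** (S ** X + X ** S))"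
    unfolding lindblad_def cscale_mat J_def sum_subtractf matrix_sum_right[symmetric] 1 ..
  also have "\<dots> = K ** X + X ** adj K + J X"
    unfolding adjK unfolding K_def
    by (simp add: matrix_diff_rdistrib matrix_diff_ldistrib matrix_add_ldistrib
        mat_mult_assoc_comm matrix_mul_assoc[symmetric] mat_neg_mult algebra_simps)
  finally show ?thesis .
qed

lemma adj_Jd: "adj (Jd X) = Jd (adj X)"
  by (simp add: Jd_def adj_sum adj_mult matrix_mul_assoc)

lemma adj_J: "adj (J X) = J (adj X)"
  by (simp add: J_def adj_sum adj_mult matrix_mul_assoc)

lemma adj_D: "adj (D X) = D (adj X)"
  by (simp add: D_form adj_J adj_mult)

lemma adj_Ds: "adj (Ds X) = Ds (adj X)"
  by (simp add: Ds_def adj_Jd adj_mult)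

lemma hs_D: "hs Y (D X) = hs (Ds Y) X"
proof -
  have a: "trace_op (adj Y ** J X) = trace_op (adj (Jd Y) ** X)"
    unfolding J_def Jd_def adj_sum matrix_sum_right matrix_sum_left trace_sum
    by (rule sum.cong) (simp_all add: trace_sandwich)
  have b: "trace_op (adj Y ** (X ** adj K)) = trace_op (adj K ** adj Y ** X)"
    by (metis trace_rot matrix_mul_assoc)
  have c: "trace_op (adj Y ** (K ** X)) = trace_op (adj Y ** K ** X)"
    by (simp add: matrix_mul_assoc)
  show ?thesis
    unfolding hs_def D_form Ds_def
    by (simp add: matrix_add_ldistrib matrix_add_rdistrib adj_mult a b c)
qed


lemma comm_S: assumes "comm_all H h A U" shows "U ** S = S ** U"
proof -
  have "U ** (adj (h a) ** h a) = adj (h a) ** h a ** U" if "a \<in> A" for a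
    using assms that unfolding comm_all_def by (metis matrix_mul_assoc)
  then show ?thesis unfolding S_def matrix_sum_left matrix_sum_right by (simp cong: sum.cong)
qed

lemma comm_H: "comm_all H h A U \<Longrightarrow> U ** H = H ** U"
  by (simp add: comm_all_def)

lemma comm_K: assumes "comm_all H h A U" shows "U ** K = K ** U"
  unfolding K_def using comm_S[OF assms] comm_H[OF assms]
  by (simp add: matrix_diff_ldistrib matrix_diff_rdistrib mat_mult_assoc_comm)
     (metis mat_mult_assoc_comm matrix_mul_assoc)

lemma comm_adjK: assumes "comm_all H h A U" shows "U ** adj K = adj K ** U"
  unfolding adjK using comm_S[OF assms] comm_H[OF assms]
  by (simp add: matrix_diff_ldistrib matrix_diff_rdistrib mat_mult_assoc_comm)
     (metis mat_mult_assoc_comm matrix_mul_assoc)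

lemma J_left: assumes "comm_all H h A U" shows "J (U ** X) = U ** J X"
proof -
  have "h a ** (U ** X) ** adj (h a) = U ** (h a ** X ** adj (h a))" if "a \<in> A" for a
    using assms that unfolding comm_all_def by (metis matrix_mul_assoc)
  then show ?thesis unfolding J_def matrix_sum_right by (simp cong: sum.cong)
qed

lemma J_right: assumes "comm_all H h A U" shows "J (X ** U) = J X ** U"
proof -
  have "h a ** (X ** U) ** adj (h a) = h a ** X ** adj (h a) ** U" if "a \<in> A" for a
    using assms that unfolding comm_all_def by (metis matrix_mul_assoc)
  then show ?thesis unfolding J_def matrix_sum_left by (simp cong: sum.cong)
qed

lemma Jd_left: assumes "comm_all H h A U" shows "Jd (U ** X) = U ** Jd X"
proof -
  have "adj (h a) ** (U ** X) ** h a = U ** (adj (h a) ** X ** h a)" if "a \<in> A" for a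
    using assms that unfolding comm_all_def by (metis matrix_mul_assoc)
  then show ?thesis unfolding Jd_def matrix_sum_right by (simp cong: sum.cong)
qed

lemma Jd_right: assumes "comm_all H h A U" shows "Jd (X ** U) = Jd X ** U"
proof -
  have "adj (h a) ** (X ** U) ** h a = adj (h a) ** X ** h a ** U" if "a \<in> A" for a
    using assms that unfolding comm_all_def by (metis matrix_mul_assoc)
  then show ?thesis unfolding Jd_def matrix_sum_left by (simp cong: sum.cong)
qed

lemma D_left: assumes "comm_all H h A U" shows "D (U ** X) = U ** D X"
  unfolding D_form J_left[OF assms]
  by (simp add: matrix_add_ldistrib matrix_mul_assoc comm_K[OF assms])

lemma D_right: assumes "comm_all H h A U" shows "D (X ** U) = D X ** U"
  unfolding D_form J_right[OF assms]
  by (simp add: matrix_add_rdistrib matrix_mul_assoc comm_adjK[OF assms])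
     (metis matrix_mul_assoc comm_adjK[OF assms])

lemma Ds_left: assumes "comm_all H h A U" shows "Ds (U ** X) = U ** Ds X"
  unfolding Ds_def Jd_left[OF assms]
  by (simp add: matrix_add_ldistrib matrix_mul_assoc comm_adjK[OF assms])

lemma Ds_right: assumes "comm_all H h A U" shows "Ds (X ** U) = Ds X ** U"
  unfolding Ds_def Jd_right[OF assms]
  by (simp add: matrix_add_rdistrib matrix_mul_assoc comm_K[OF assms])
     (metis matrix_mul_assoc comm_K[OF assms])

lemma J_add: "J (X + Y) = J X + J Y"
  by (simp add: J_def matrix_add_ldistrib matrix_add_rdistrib sum.distrib)
lemma Jd_add: "Jd (X + Y) = Jd X + Jd Y"
  by (simp add: Jd_def matrix_add_ldistrib matrix_add_rdistrib sum.distrib)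

lemma D_add: "D (X + Y) = D X + D Y"
  by (simp add: D_form J_add matrix_add_ldistrib matrix_add_rdistrib)
lemma Ds_add: "Ds (X + Y) = Ds X + Ds Y"
  by (simp add: Ds_def Jd_add matrix_add_ldistrib matrix_add_rdistrib)

lemma D_mat: "D (mat c ** X) = mat c ** D X"
  by (rule D_left[OF comm_all_mat])
lemma Ds_mat: "Ds (mat c ** X) = mat c ** Ds X"
  by (rule Ds_left[OF comm_all_mat])

lemma linear_D: "linear D"
  by (rule linearI) (simp_all add: D_add scaleR_mat D_mat)
lemma linear_Ds: "linear Ds"
  by (rule linearI) (simp_all add: Ds_add scaleR_mat Ds_mat)

lemma Ds_diff: "Ds (X - Y) = Ds X - Ds Y"
  using linear_diff[OF linear_Ds] .
lemma Jd_one: "Jd (mat 1) = S"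
  by (simp add: Jd_def S_def)

text \<open>Trace preservation of the semigroup, in dual form: \<open>Ds(1) = 0\<close>; hence \<open>Ds\<close> kills every
  symmetry, and \<open>D\<close> has trace zero.\<close>

lemma Ds_one: "Ds (mat 1) = 0"
proof -
  have "Ds (mat 1) = (K + adj K) + S" by (simp add: Ds_def Jd_one add_ac)
  then show ?thesis by (simp add: K_adjK)
qed

lemma Ds_comm_zero: assumes "comm_all H h A P" shows "Ds P = 0"
  using Ds_left[OF assms, of "mat 1"] by (simp add: Ds_one)

lemma trace_D: "trace_op (D X) = 0"
proof -
  have "trace_op (D X) = hs (mat 1) (D X)" by (simp add: hs_def)
  also have "\<dots> = hs (Ds (mat 1)) X" by (rule hs_D)
  finally show ?thesis by (simp add: Ds_one hs_def)
qed

lemma dissipation: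
  "Ds (adj W ** W) - adj W ** Ds W - Ds (adj W) ** W
     = (\<Sum>a\<in>A. adj (h a ** W - W ** h a) ** (h a ** W - W ** h a))"
proof -
  have 1: "Jd (adj W ** W) - adj W ** Jd W - Jd (adj W) ** W + adj W ** S ** W
      = (\<Sum>a\<in>A. adj (h a ** W - W ** h a) ** (h a ** W - W ** h a))"
    unfolding Jd_def S_def matrix_sum_right matrix_sum_left sum_subtractf[symmetric] sum.distrib[symmetric]
    by (rule sum.cong) (simp_all add: adj_mult matrix_diff_ldistrib matrix_diff_rdistrib matrix_mul_assoc algebra_simps)
  have 2: "adj W ** S ** W = - (adj W ** K ** W + adj W ** adj K ** W)"
    using K_adjK by (metis matrix_add_ldistrib matrix_add_rdistrib matrix_uminus_left matrix_uminus_right minus_minus)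
  show ?thesis unfolding 1[symmetric] 2 Ds_def
    by (simp add: adj_mult matrix_add_ldistrib matrix_add_rdistrib matrix_mul_assoc algebra_simps)
qed

text \<open>The exponential series defining the semigroup converges, since \<open>D\<close> is bounded.\<close>

lemma D_pow_bound: "\<exists>B>0. \<forall>k x. norm ((D ^^ k) x) \<le> B ^ k * norm x"
proof -
  have "bounded_linear D" using linear_D linear_conv_bounded_linear by blast
  then obtain B where B: "B > 0" "\<And>x. norm (D x) \<le> norm x * B"
    using bounded_linear.pos_bounded by blast
  have "norm ((D ^^ k) x) \<le> B ^ k * norm x" for k x
  proof (induction k)
    case 0 then show ?case by simp
  next
    case (Suc k)
    have "norm ((D ^^ Suc k) x) \<le> norm ((D ^^ k) x) * B" using B by simp
    also have "\<dots> \<le> B ^ k * norm x * B" using Suc B by (simp add: mult_right_mono)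
    finally show ?case by (simp add: mult_ac)
  qed
  then show ?thesis using B by blast
qed

lemma semigroup_summable: "summable (\<lambda>k. (t ^ k / fact k) *\<^sub>R ((D ^^ k) x))"
proof -
  obtain B where B: "B > 0" "\<And>k x. norm ((D ^^ k) x) \<le> B ^ k * norm x"
    using D_pow_bound by blast
  have g: "summable (\<lambda>k. norm x * (inverse (fact k) * (\<bar>t\<bar> * B) ^ k))"
    by (rule summable_mult) (rule summable_exp)
  have "norm ((t ^ k / fact k) *\<^sub>R ((D ^^ k) x)) \<le> norm x * (inverse (fact k) * (\<bar>t\<bar> * B) ^ k)" for k
  proof -
    have "norm ((t ^ k / fact k) *\<^sub>R ((D ^^ k) x)) = \<bar>t\<bar> ^ k / fact k * norm ((D ^^ k) x)"
      by (simp add: power_abs)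
    also have "\<dots> \<le> \<bar>t\<bar> ^ k / fact k * (B ^ k * norm x)"
      using B by (intro mult_left_mono) auto
    also have "\<dots> = norm x * (inverse (fact k) * (\<bar>t\<bar> * B) ^ k)"
      by (simp add: power_mult_distrib field_simps)
    finally show ?thesis .
  qed
  then show ?thesis
    by (intro summable_comparison_test[OF _ g]) auto
qed

text \<open>If \<open>D\<close> maps the block \<open>Q\<cdot>Q\<close> into itself, so does every term of the series, hence \<open>Q\<H>\<close>
  is collecting.\<close>

lemma collecting_of_invariant:
  assumes Q: "orth_proj Q" and inv: "\<And>X. D (Q ** X ** Q) = Q ** D (Q ** X ** Q) ** Q"
  shows "collecting H h A Q"
proof -
  let ?C = "\<lambda>Y. Q ** Y ** Q"
  have CC: "?C (?C Y) = ?C Y" for Y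
    using Q by (simp add: matrix_mul_assoc proj_idem_right) (metis matrix_mul_assoc orth_projD(2))
  have pow: "?C ((D ^^ k) (?C X)) = (D ^^ k) (?C X)" for k X
  proof (induction k)
    case 0 then show ?case by (simp add: CC)
  next
    case (Suc k)
    have "(D ^^ Suc k) (?C X) = D ((D ^^ k) (?C X))" by simp
    also have "\<dots> = D (?C ((D ^^ k) (?C X)))" using Suc by metis
    also have "\<dots> = ?C (D (?C ((D ^^ k) (?C X))))" by (rule inv)
    also have "\<dots> = ?C (D ((D ^^ k) (?C X)))" using Suc by metis
    finally have eq: "(D ^^ Suc k) (?C X) = ?C (D ((D ^^ k) (?C X)))" .
    show ?case by (simp only: eq CC)
  qed
  have bl: "bounded_linear ?C" using sandwich_linear linear_conv_bounded_linear by blast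
  have "semigroup H h A t (?C \<sigma>) = ?C (semigroup H h A t (?C \<sigma>))" for t \<sigma>
  proof -
    have "?C (semigroup H h A t (?C \<sigma>)) = (\<Sum>k. ?C ((t ^ k / fact k) *\<^sub>R ((D ^^ k) (?C \<sigma>))))"
      unfolding semigroup_def by (rule bounded_linear.suminf[OF bl semigroup_summable])
    also have "\<dots> = semigroup H h A t (?C \<sigma>)"
      unfolding semigroup_def
      by (rule suminf_cong) (simp add: linear_cmul[OF sandwich_linear] pow)
    finally show ?thesis by simp
  qed
  then show ?thesis using Q by (simp add: collecting_def)
qed

lemma D_compress_invariant:
  assumes Q: "orth_proj Q" and KQ: "Q ** K ** Q = K ** Q"
    and hQ: "\<And>a. a \<in> A \<Longrightarrow> Q ** h a ** Q = h a ** Q"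
  shows "D (Q ** X ** Q) = Q ** D (Q ** X ** Q) ** Q"
proof -
  have aQ: "adj Q = Q" "Q ** Q = Q" using Q by (simp_all add: orth_projD)
  have KQ': "Z ** Q ** K ** Q = Z ** K ** Q" for Z by (metis KQ matrix_mul_assoc)
  have aKQ: "Q ** adj K ** Q = Q ** adj K"
    using arg_cong[OF KQ, of adj] by (simp add: adj_mult aQ matrix_mul_assoc)
  have aKQ': "Z ** Q ** adj K ** Q = Z ** Q ** adj K" for Z by (metis aKQ matrix_mul_assoc)
  have hQ': "Z ** Q ** h a ** Q = Z ** h a ** Q" if "a \<in> A" for Z a by (metis hQ[OF that] matrix_mul_assoc)
  have ahQ: "Q ** adj (h a) ** Q = Q ** adj (h a)" if "a \<in> A" for a
    using arg_cong[OF hQ[OF that], of adj] by (simp add: adj_mult aQ matrix_mul_assoc)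
  have ahQ': "Z ** Q ** adj (h a) ** Q = Z ** Q ** adj (h a)" if "a \<in> A" for Z a
    by (metis ahQ[OF that] matrix_mul_assoc)
  have QQ: "Z ** Q ** Q = Z ** Q" for Z using proj_idem_right[OF Q] .
  have J: "Q ** J (Q ** X ** Q) ** Q = J (Q ** X ** Q)"
    unfolding J_def matrix_sum_left matrix_sum_right
    by (rule sum.cong) (simp_all add: matrix_mul_assoc QQ hQ' ahQ' hQ ahQ aQ)
  show ?thesis
    unfolding D_form
    by (simp add: matrix_add_ldistrib matrix_add_rdistrib J[unfolded matrix_mul_assoc])
       (simp add: matrix_mul_assoc QQ KQ' KQ aKQ' aKQ aQ)
qed

lemma irr_subspace:
  assumes irr: "no_proper_collecting H h A P" and P: "orth_proj P"
    and E: "csub E" and EP: "\<And>v. v \<in> E \<Longrightarrow> P *v v = v" and v0: "v0 \<in> E" "v0 \<noteq> 0"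
    and invK: "\<And>v. v \<in> E \<Longrightarrow> K *v v \<in> E"
    and invh: "\<And>a v. a \<in> A \<Longrightarrow> v \<in> E \<Longrightarrow> h a *v v \<in> E"
  shows "P *v v \<in> E"
proof -
  obtain Q where Q: "orth_proj Q" "\<And>v. Q *v v \<in> E" "\<And>v. v \<in> E \<Longrightarrow> Q *v v = v"
    using proj_onto[OF E] by blast
  have PQ: "P ** Q = Q"
    unfolding matrix_eq by (simp add: matrix_vector_mul_assoc[symmetric] EP Q)
  have Qne: "Q \<noteq> 0" using Q(3)[OF v0(1)] v0(2) by auto
  have KQ: "Q ** K ** Q = K ** Q"
    unfolding matrix_eq by (simp add: matrix_vector_mul_assoc[symmetric] Q invK)
  have hQ: "Q ** h a ** Q = h a ** Q" if "a \<in> A" for a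
    unfolding matrix_eq by (simp add: matrix_vector_mul_assoc[symmetric] Q invh that)
  have "collecting H h A Q"
    by (rule collecting_of_invariant[OF Q(1)]) (rule D_compress_invariant[OF Q(1) KQ hQ])
  then have "Q = P" using irr Q(1) PQ Qne unfolding no_proper_collecting_def by blast
  then show ?thesis using Q(2) by metis
qed


lemma Ds_vec: assumes "Y *v v = 0"
  shows "Ds Y *v v = Y *v (K *v v) + (\<Sum>a\<in>A. adj (h a) *v (Y *v (h a *v v)))"
  using assms
  by (simp add: Ds_def Jd_def matrix_vector_mult_add_rdistrib matrix_vector_sum_left
      matrix_vector_mul_assoc[symmetric])

lemma Ds_quad: assumes Yh: "Y = adj Y" and Yv: "Y *v v = 0"
  shows "cinner v (Ds Y *v v) = (\<Sum>a\<in>A. cinner (h a *v v) (Y *v (h a *v v)))"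
proof -
  have "cinner v (Y *v (K *v v)) = 0"
    by (metis Yh Yv cinner_adj cinner_zero_left)
  moreover have "cinner v (adj (h a) *v w) = cinner (h a *v v) w" for a w
    by (simp add: cinner_adj)
  ultimately show ?thesis
    by (simp add: Ds_vec[OF Yv] cinner_add_right cinner_sum_right)
qed
text \<open>If \<open>Y \<ge> 0\<close> and \<open>Ds(Y) \<le> 0\<close>, the kernel of \<open>Y\<close> is invariant under \<open>K\<close> and all \<open>h\<^sub>\<alpha>\<close>: on a
  kernel vector the form of \<open>-Ds(Y)\<close> is \<open>-\<Sum> \<langle>hv, Y hv\<rangle> \<le> 0\<close>, so every term vanishes.\<close>

lemma psd_kernel_invariant:
  assumes psdY: "psd_op Y" and neg: "psd_op (- Ds Y)" and Yv: "Y *v v = 0"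
  shows "(\<forall>a\<in>A. Y *v (h a *v v) = 0) \<and> Y *v (K *v v) = 0"
proof -
  have Yh: "Y = adj Y" using psdY by (simp add: psd_op_iff)
  let ?q = "\<lambda>a. Re (cinner (h a *v v) (Y *v (h a *v v)))"
  have nn: "0 \<le> ?q a" for a
    using psdY by (simp add: psd_op_iff)
  have eqR: "Re (cinner v ((- Ds Y) *v v)) = - (\<Sum>a\<in>A. ?q a)"
    by (simp add: mv_uminus cinner_uminus_right Ds_quad[OF Yh Yv] Re_sum)
  have "0 \<le> Re (cinner v ((- Ds Y) *v v))" using neg by (simp add: psd_op_iff)
  then have s0: "(\<Sum>a\<in>A. ?q a) = 0"
    unfolding eqR using sum_nonneg[of A ?q] nn by force
  have hv: "Y *v (h a *v v) = 0" if a: "a \<in> A" for a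
  proof -
    have "?q a = 0"
      using s0 sum_nonneg_eq_0_iff[OF finA, of ?q] nn a by blast
    then show ?thesis using psd_kernel[OF psdY] by blast
  qed
  have "Re (cinner v ((- Ds Y) *v v)) = 0" using s0 eqR by simp
  then have "Ds Y *v v = 0" using psd_kernel[OF neg] by (simp add: mv_uminus)
  moreover have "(\<Sum>a\<in>A. adj (h a) *v (Y *v (h a *v v))) = 0"
    using hv by simp
  ultimately have "Y *v (K *v v) = 0" by (simp add: Ds_vec[OF Yv])
  then show ?thesis using hv by blast
qed

lemma psd_block_kernel_zero:
  assumes irr: "no_proper_collecting H h A P" and P: "orth_proj P" and cP: "comm_all H h A P"
    and psdY: "psd_op Y" and YP: "Y = P ** Y ** P" and neg: "psd_op (- Ds Y)"
    and v0: "P *v v0 = v0" "v0 \<noteq> 0" "Y *v v0 = 0"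
  shows "Y = 0"
proof -
  define E where "E = {v. P *v v = v \<and> Y *v v = 0}"
  have csE: "csub E"
    unfolding csub_def E_def
    by (simp add: matrix_vector_right_distrib matrix_vector_scale vector_add_ldistrib)
  have Ph: "P *v (h a *v v) = h a *v (P *v v)" if "a \<in> A" for a v
    using cP that unfolding comm_all_def by (simp add: matrix_vector_mul_assoc)
  have PK: "P *v (K *v v) = K *v (P *v v)" for v
    by (simp add: matrix_vector_mul_assoc comm_K[OF cP])
  have hE: "h a *v v \<in> E" if "v \<in> E" "a \<in> A" for v a
    using psd_kernel_invariant[OF psdY neg, of v] that Ph by (auto simp: E_def)
  have KE: "K *v v \<in> E" if "v \<in> E" for v
    using psd_kernel_invariant[OF psdY neg, of v] that PK by (auto simp: E_def)
  have allE: "P *v w \<in> E" for w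
    by (rule irr_subspace[OF irr P csE _ _ v0(2)]) (use hE KE v0 in \<open>auto simp: E_def\<close>)
  have "Y ** P = 0"
    unfolding matrix_eq using allE by (simp add: E_def matrix_vector_mul_assoc[symmetric])
  then show "Y = 0" using YP by (metis matrix_mul_assoc times0_right)
qed

text \<open>Hence a hermitian block \<open>Z = PZP\<close> with \<open>Ds(Z) \<ge> 0\<close> is a real multiple of \<open>P\<close>:
  apply the previous lemma to \<open>lP - Z\<close> for the top eigenvalue \<open>l\<close> of \<open>Z\<close>.\<close>

lemma herm_block_scalar:
  assumes irr: "no_proper_collecting H h A P" and P: "orth_proj P" and Pne: "P \<noteq> 0"
    and cP: "comm_all H h A P"
    and Zh: "Z = adj Z" and ZP: "Z = P ** Z ** P" and pos: "psd_op (Ds Z)"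
  shows "\<exists>l::real. Z = mat (of_real l) ** P"
proof -
  obtain l v0 where v0: "P *v v0 = v0" "v0 \<noteq> 0"
    and psdY: "psd_op (mat (of_real l) ** P - Z)" and Yv0: "(mat (of_real l) ** P - Z) *v v0 = 0"
    using top_eigen_gap[OF P Pne Zh ZP] by blast
  have aP: "P ** P = P" using P by (simp add: orth_projD)
  have YP: "mat (of_real l) ** P - Z = P ** (mat (of_real l) ** P - Z) ** P"
    by (simp add: matrix_diff_ldistrib matrix_diff_rdistrib sandwich_mat aP ZP[symmetric])
  have "- Ds (mat (of_real l) ** P - Z) = Ds Z"
    by (simp add: Ds_diff Ds_mat Ds_comm_zero[OF cP])
  then have "mat (of_real l) ** P - Z = 0"
    using psd_block_kernel_zero[OF irr P cP psdY YP _ v0 Yv0] pos by simp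
  then show ?thesis by auto
qed

lemma block_kernel_scalar:
  assumes irr: "no_proper_collecting H h A P" and P: "orth_proj P" and Pne: "P \<noteq> 0"
    and cP: "comm_all H h A P"
    and ZP: "Z = P ** Z ** P" and DZ: "Ds Z = 0"
  shows "\<exists>c. Z = mat c ** P"
proof -
  have hp: "Ds (herm_part Z) = 0" "Ds (aherm_part Z) = 0"
    using kernel_herm_parts[of Ds, OF Ds_add Ds_mat adj_Ds[symmetric] DZ] by simp_all
  have bp: "herm_part Z = P ** herm_part Z ** P" "aherm_part Z = P ** aherm_part Z ** P"
    using herm_parts_sandwich[OF orth_projD(1)[OF P] ZP] by simp_all
  obtain l1 where l1: "herm_part Z = mat (of_real l1) ** P"
    using herm_block_scalar[OF irr P Pne cP herm_part_herm bp(1)] hp psd_zero by auto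
  obtain l2 where l2: "aherm_part Z = mat (of_real l2) ** P"
    using herm_block_scalar[OF irr P Pne cP aherm_part_herm bp(2)] hp psd_zero by auto
  have "Z = mat (of_real l1 + \<i> * of_real l2) ** P"
    by (subst herm_decomp) (simp add: l1 l2 matrix_mul_assoc matrix_add_rdistrib[symmetric] mat_add)
  then show ?thesis by blast
qed

text \<open>A block \<open>W = PWQ\<close> in the kernel of \<open>Ds\<close> commutes with every \<open>h\<^sub>\<alpha>\<close>: by the dissipation
  identity \<open>Ds(W\<^sup>\<dagger>W) = \<Sum> [h,W]\<^sup>\<dagger>[h,W] \<ge> 0\<close>, so \<open>W\<^sup>\<dagger>W\<close> is a multiple of \<open>Q\<close>, whence \<open>Ds(W\<^sup>\<dagger>W) = 0\<close>.\<close>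

lemma comm_of_kernel:
  assumes irr: "no_proper_collecting H h A Q" and Q: "orth_proj Q" and Qne: "Q \<noteq> 0"
    and cQ: "comm_all H h A Q" and P: "orth_proj P"
    and W: "W = P ** W ** Q" and DW: "Ds W = 0"
  shows "\<forall>a\<in>A. h a ** W = W ** h a"
proof -
  have aQ: "adj Q = Q" "Q ** Q = Q" using Q by (simp_all add: orth_projD)
  have WQ: "W ** Q = W" by (metis W proj_idem_right[OF Q])
  have QaW: "Q ** adj W = adj W" using arg_cong[OF WQ, of adj] by (simp add: adj_mult aQ)
  define Z where "Z = adj W ** W"
  have Zh: "Z = adj Z" by (simp add: Z_def adj_mult)
  have ZQ: "Z = Q ** Z ** Q"
    unfolding Z_def by (metis QaW WQ matrix_mul_assoc)
  have DaW: "Ds (adj W) = 0" using DW by (metis adj_Ds adj_zero)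
  have DZ: "Ds Z = (\<Sum>a\<in>A. adj (h a ** W - W ** h a) ** (h a ** W - W ** h a))"
    using dissipation[of W] by (simp add: Z_def DW DaW)
  have "psd_op (Ds Z)" unfolding DZ by (intro psd_sum psd_adj_mult)
  then obtain l where "Z = mat (of_real l) ** Q"
    using herm_block_scalar[OF irr Q Qne cQ Zh ZQ] by blast
  then have "Ds Z = 0" by (simp add: Ds_mat Ds_comm_zero[OF cQ])
  then have z: "(\<Sum>a\<in>A. adj (h a ** W - W ** h a) ** (h a ** W - W ** h a)) = 0" using DZ by simp
  have "h a ** W - W ** h a = 0" if "a \<in> A" for a
    by (rule sum_adj_mult_zero[OF finA z that])
  then show ?thesis by simp
qed

text \<open>An operator commuting with all \<open>h\<^sub>\<alpha>\<close> and \<open>h\<^sub>\<alpha>\<^sup>\<dagger>\<close> and lying in the kernel of \<open>Ds\<close> also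
  commutes with \<open>H\<close>: then \<open>Ds(W) = WK - KW\<close>, and \<open>W\<close> already commutes with \<open>S\<close>.\<close>

lemma comm_H_of_kernel:
  assumes c1: "\<forall>a\<in>A. h a ** W = W ** h a" and c2: "\<forall>a\<in>A. W ** adj (h a) = adj (h a) ** W"
    and DW: "Ds W = 0"
  shows "W ** H = H ** W"
proof -
  have JdW: "Jd W = S ** W"
    unfolding Jd_def S_def matrix_sum_left
    by (rule sum.cong) (simp_all add: c1 matrix_mul_assoc[symmetric])
  have SW: "W ** S = S ** W"
  proof -
    have "W ** (adj (h a) ** h a) = adj (h a) ** h a ** W" if "a \<in> A" for a
      using c1 c2 that by (metis matrix_mul_assoc)
    then show ?thesis unfolding S_def matrix_sum_left matrix_sum_right by (simp cong: sum.cong)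
  qed
  have aKS: "adj K + S = - K"
    using K_adjK by (simp add: eq_neg_iff_add_eq_0 add.commute add.left_commute)
  have "Ds W = W ** K - K ** W" by (simp add: Ds_def JdW matrix_add_rdistrib[symmetric] aKS)
  then have KW: "W ** K = K ** W" using DW by simp
  have "W ** K = mat (- \<i>) ** (W ** H) - mat (1/2) ** (W ** S)"
    by (simp add: K_def matrix_diff_ldistrib mat_mult_assoc_comm)
  moreover have "K ** W = mat (- \<i>) ** (H ** W) - mat (1/2) ** (S ** W)"
    by (simp add: K_def matrix_diff_rdistrib matrix_mul_assoc)
  ultimately have "mat \<i> ** (mat (- \<i>) ** (W ** H)) = mat \<i> ** (mat (- \<i>) ** (H ** W))"
    using KW SW by simp
  then show "W ** H = H ** W" by (simp add: mat_mult_mat_left)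
qed

text \<open>Applying \<open>comm_of_kernel\<close> to \<open>W\<close> and \<open>W\<^sup>\<dagger>\<close>, a block \<open>W = PWQ\<close> in the kernel of \<open>Ds\<close>
  between two irreducible blocks is a symmetry of the generator.\<close>

lemma comm_all_of_kernel:
  assumes irrP: "no_proper_collecting H h A P" and P: "orth_proj P" and Pne: "P \<noteq> 0"
    and cP: "comm_all H h A P"
    and irrQ: "no_proper_collecting H h A Q" and Q: "orth_proj Q" and Qne: "Q \<noteq> 0"
    and cQ: "comm_all H h A Q"
    and W: "W = P ** W ** Q" and DW: "Ds W = 0"
  shows "comm_all H h A W"
proof -
  have aP: "adj P = P" and aQ: "adj Q = Q" using P Q by (simp_all add: orth_projD)
  have c1: "\<forall>a\<in>A. h a ** W = W ** h a" by (rule comm_of_kernel[OF irrQ Q Qne cQ P W DW])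
  have aW: "adj W = Q ** adj W ** P"
    using arg_cong[OF W, of adj] by (simp add: adj_mult aP aQ matrix_mul_assoc)
  have DaW: "Ds (adj W) = 0" using DW by (metis adj_Ds adj_zero)
  have "\<forall>a\<in>A. h a ** adj W = adj W ** h a" by (rule comm_of_kernel[OF irrP P Pne cP Q aW DaW])
  then have c2: "\<forall>a\<in>A. W ** adj (h a) = adj (h a) ** W" by (metis adj_adj adj_mult)
  show ?thesis unfolding comm_all_def using comm_H_of_kernel[OF c1 c2 DW] c1 c2 by auto
qed

text \<open>\<open>Dblock P Q\<close> acts as \<open>D\<close> on the block \<open>P\<cdot>Q\<close> and as the identity on its complement, so
  its kernel is exactly the block kernel of \<open>D\<close>; likewise \<open>Dsblock\<close> for \<open>Ds\<close>.\<close>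

definition Dblock :: "'n op \<Rightarrow> 'n op \<Rightarrow> 'n op \<Rightarrow> 'n op" where "Dblock P Q X = D (P ** X ** Q) + (X - P ** X ** Q)"
definition Dsblock :: "'n op \<Rightarrow> 'n op \<Rightarrow> 'n op \<Rightarrow> 'n op" where "Dsblock P Q Y = Ds (P ** Y ** Q) + (Y - P ** Y ** Q)"

lemma Dblock_mat: "Dblock P Q (mat c ** X) = mat c ** Dblock P Q X"
  by (simp add: Dblock_def sandwich_mat D_mat matrix_add_ldistrib matrix_diff_ldistrib)
lemma Dsblock_mat: "Dsblock P Q (mat c ** X) = mat c ** Dsblock P Q X"
  by (simp add: Dsblock_def sandwich_mat Ds_mat matrix_add_ldistrib matrix_diff_ldistrib)

lemma linear_Dblock: "linear (Dblock P Q)"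
  by (rule linearI)
     (simp_all add: Dblock_def matrix_add_ldistrib matrix_add_rdistrib D_add scaleR_mat Dblock_mat[unfolded Dblock_def])
lemma linear_Dsblock: "linear (Dsblock P Q)"
  by (rule linearI)
     (simp_all add: Dsblock_def matrix_add_ldistrib matrix_add_rdistrib Ds_add scaleR_mat Dsblock_mat[unfolded Dsblock_def])

lemma Dblock_adj:
  assumes P: "orth_proj P" and Q: "orth_proj Q" and cP: "comm_all H h A P" and cQ: "comm_all H h A Q"
  shows "hs (Dblock P Q X) Y = hs X (Dsblock P Q Y)"
proof -
  have aP: "adj P = P" and aQ: "adj Q = Q" using P Q by (simp_all add: orth_projD)
  have "hs (D (P ** X ** Q)) Y = cnj (hs Y (D (P ** X ** Q)))" by (simp add: hs_cnj)
  also have "\<dots> = cnj (hs (Ds Y) (P ** X ** Q))" by (simp add: hs_D)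
  also have "\<dots> = hs (P ** X ** Q) (Ds Y)" by (simp add: hs_cnj)
  also have "\<dots> = hs X (P ** Ds Y ** Q)" by (rule hs_sandwich[OF aP aQ])
  also have "P ** Ds Y ** Q = Ds (P ** Y ** Q)" by (simp add: Ds_left[OF cP] Ds_right[OF cQ])
  finally have 1: "hs (D (P ** X ** Q)) Y = hs X (Ds (P ** Y ** Q))" .
  have 2: "hs (P ** X ** Q) Y = hs X (P ** Y ** Q)" by (rule hs_sandwich[OF aP aQ])
  show ?thesis unfolding Dblock_def Dsblock_def
    by (simp add: hs_add_left hs_add_right hs_diff_left hs_diff_right 1 2)
qed

lemma Dblock_zero_iff:
  assumes P: "orth_proj P" and Q: "orth_proj Q" and cP: "comm_all H h A P" and cQ: "comm_all H h A Q"
  shows "Dblock P Q X = 0 \<longleftrightarrow> X = P ** X ** Q \<and> D X = 0"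
proof
  have PP: "P ** P = P" and QQ: "Q ** Q = Q" using P Q by (simp_all add: orth_projD)
  have CC: "P ** (P ** Y ** Q) ** Q = P ** Y ** Q" for Y
    by (metis PP QQ matrix_mul_assoc)
  have CD: "P ** D Y ** Q = D (P ** Y ** Q)" for Y by (simp add: D_left[OF cP] D_right[OF cQ])
  assume F0: "Dblock P Q X = 0"
  then have "P ** (Dblock P Q X) ** Q = 0" by simp
  then have "D (P ** X ** Q) = 0"
    unfolding Dblock_def by (simp add: matrix_add_ldistrib matrix_add_rdistrib matrix_diff_ldistrib
        matrix_diff_rdistrib CD CC)
  moreover from this F0 have "X = P ** X ** Q" by (simp add: Dblock_def)
  ultimately show "X = P ** X ** Q \<and> D X = 0" by simp
next
  assume "X = P ** X ** Q \<and> D X = 0"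
  then show "Dblock P Q X = 0" unfolding Dblock_def by (metis add.right_neutral diff_self)
qed

lemma Dsblock_zero_iff:
  assumes P: "orth_proj P" and Q: "orth_proj Q" and cP: "comm_all H h A P" and cQ: "comm_all H h A Q"
  shows "Dsblock P Q X = 0 \<longleftrightarrow> X = P ** X ** Q \<and> Ds X = 0"
proof
  have PP: "P ** P = P" and QQ: "Q ** Q = Q" using P Q by (simp_all add: orth_projD)
  have CC: "P ** (P ** Y ** Q) ** Q = P ** Y ** Q" for Y
    by (metis PP QQ matrix_mul_assoc)
  have CD: "P ** Ds Y ** Q = Ds (P ** Y ** Q)" for Y by (simp add: Ds_left[OF cP] Ds_right[OF cQ])
  assume F0: "Dsblock P Q X = 0"
  then have "P ** (Dsblock P Q X) ** Q = 0" by simp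
  then have "Ds (P ** X ** Q) = 0"
    unfolding Dsblock_def by (simp add: matrix_add_ldistrib matrix_add_rdistrib matrix_diff_ldistrib
        matrix_diff_rdistrib CD CC)
  moreover from this F0 have "X = P ** X ** Q" by (simp add: Dsblock_def)
  ultimately show "X = P ** X ** Q \<and> Ds X = 0" by simp
next
  assume "X = P ** X ** Q \<and> Ds X = 0"
  then show "Dsblock P Q X = 0" unfolding Dsblock_def by (metis add.right_neutral diff_self)
qed

lemma dual_kernel_exists:
  assumes P: "orth_proj P" and Q: "orth_proj Q" and cP: "comm_all H h A P" and cQ: "comm_all H h A Q"
    and X: "X \<noteq> 0" "X = P ** X ** Q" "D X = 0"
  shows "\<exists>W. W \<noteq> 0 \<and> W = P ** W ** Q \<and> Ds W = 0"
proof -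
  have "\<not> inj (Dblock P Q)"
    using X Dblock_zero_iff[OF P Q cP cQ, of X] linear_inj_iff[OF linear_Dblock] by blast
  then have "\<not> inj (Dsblock P Q)"
    using inj_from_adj[OF linear_Dblock Dblock_adj[OF P Q cP cQ]] by blast
  then obtain W where "W \<noteq> 0" "Dsblock P Q W = 0" using linear_inj_iff[OF linear_Dsblock] by blast
  then show ?thesis using Dsblock_zero_iff[OF P Q cP cQ] by blast
qed

lemma kernel_exists_from_dual:
  assumes P: "orth_proj P" and Q: "orth_proj Q" and cP: "comm_all H h A P" and cQ: "comm_all H h A Q"
    and W: "W \<noteq> 0" "W = P ** W ** Q" "Ds W = 0"
  shows "\<exists>X. X \<noteq> 0 \<and> X = P ** X ** Q \<and> D X = 0"
proof -
  have "\<not> inj (Dsblock P Q)"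
    using W Dsblock_zero_iff[OF P Q cP cQ, of W] linear_inj_iff[OF linear_Dsblock] by blast
  moreover have "hs (Dsblock P Q Y) X = hs Y (Dblock P Q X)" for X Y
    using Dblock_adj[OF P Q cP cQ, of X Y] by (metis hs_cnj)
  ultimately have "\<not> inj (Dblock P Q)"
    using inj_from_adj[OF linear_Dsblock] by blast
  then obtain X where "X \<noteq> 0" "Dblock P Q X = 0" using linear_inj_iff[OF linear_Dblock] by blast
  then show ?thesis using Dblock_zero_iff[OF P Q cP cQ] by blast
qed

text \<open>Given a stationary \<open>\<rho> = P\<rho>P\<close> of unit trace, the map
  \<open>Y \<mapsto> Dsblock P P Y + tr(PY)\<close> is injective: pairing with \<open>\<rho>\<close> shows \<open>tr(PY) = 0\<close>, and then
  \<open>Y\<close> is a block kernel of \<open>Ds\<close>, a multiple of \<open>P\<close> with zero trace.\<close>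

lemma Dsblock_trace_inj:
  assumes irr: "no_proper_collecting H h A P" and P: "orth_proj P" and Pne: "P \<noteq> 0"
    and cP: "comm_all H h A P"
    and rho: "\<rho> = P ** \<rho> ** P" "D \<rho> = 0" "trace_op \<rho> = 1"
  shows "inj (\<lambda>Y. Dsblock P P Y + mat (trace_op (P ** Y)))"
proof -
  let ?G = "\<lambda>Y. Dsblock P P Y + mat (trace_op (P ** Y))"
  have aP: "adj P = P" "P ** P = P" using P by (simp_all add: orth_projD)
  have linG: "linear ?G"
  proof (rule linearI)
    fix x y show "?G (x + y) = ?G x + ?G y"
      using linear_add[OF linear_Dsblock] by (simp add: matrix_add_ldistrib mat_add add_ac)
  next
    fix r x show "?G (r *\<^sub>R x) = r *\<^sub>R ?G x"
      by (simp add: trace_mat_mult scaleR_mat Dsblock_mat matrix_add_ldistrib mat_mult_assoc_comm)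
  qed
  have Drho: "Dblock P P \<rho> = 0" using Dblock_zero_iff[OF P P cP cP] rho by blast
  show ?thesis
    unfolding linear_inj_iff[OF linG]
  proof (intro allI impI)
    fix Y assume G0: "?G Y = 0"
    have "hs \<rho> (Dsblock P P Y) = 0" using Dblock_adj[OF P P cP cP, of \<rho> Y] Drho by simp
    moreover have "hs \<rho> (mat t) = t" for t
      using hs_mat_right[of \<rho> t "mat 1"] rho(3) by (simp add: hs_def trace_adj)
    ultimately have "hs \<rho> (?G Y) = trace_op (P ** Y)" by (simp add: hs_add_right)
    then have t0: "trace_op (P ** Y) = 0" using G0 by simp
    then have "Dsblock P P Y = 0" using G0 by simp
    then have "Y = P ** Y ** P \<and> Ds Y = 0" using Dsblock_zero_iff[OF P P cP cP] by blast
    then obtain c where c: "Y = mat c ** P" using block_kernel_scalar[OF irr P Pne cP] by blast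
    then have "trace_op (P ** Y) = c * trace_op P" by (simp add: mat_mult_assoc_comm aP trace_mat_mult)
    then have "c = 0" using t0 trace_proj_nonzero[OF P Pne] by simp
    then show "Y = 0" using c by simp
  qed
qed

text \<open>By duality, \<open>X \<mapsto> Dblock P P X + tr(X) P\<close> is injective too, so the stationary blocks of
  \<open>P\<close> are exactly the multiples of \<open>\<rho>\<close>.\<close>

lemma kernel_unique:
  assumes irr: "no_proper_collecting H h A P" and P: "orth_proj P" and Pne: "P \<noteq> 0"
    and cP: "comm_all H h A P"
    and rho: "\<rho> = P ** \<rho> ** P" "D \<rho> = 0" "trace_op \<rho> = 1"
    and X: "X = P ** X ** P" "D X = 0"
  shows "X = mat (trace_op X) ** \<rho>"
proof -
  let ?F = "\<lambda>X. Dblock P P X + mat (trace_op X) ** P"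
  let ?G = "\<lambda>Y. Dsblock P P Y + mat (trace_op (P ** Y))"
  have aP: "adj P = P" using P by (simp add: orth_projD)
  have linF: "linear ?F"
  proof (rule linearI)
    fix x y show "?F (x + y) = ?F x + ?F y"
      using linear_add[OF linear_Dblock] by (simp add: matrix_add_rdistrib[symmetric] mat_add add_ac)
  next
    fix r x show "?F (r *\<^sub>R x) = r *\<^sub>R ?F x"
      by (simp add: trace_mat_mult scaleR_mat Dblock_mat matrix_add_ldistrib matrix_mul_assoc)
  qed
  have adjFG: "hs (?F X) Y = hs X (?G Y)" for X Y
  proof -
    have "hs (mat (trace_op X) ** P) Y = cnj (trace_op X) * trace_op (P ** Y)"
      by (simp add: hs_mat_left) (simp add: hs_def aP)
    moreover have "hs X (mat (trace_op (P ** Y))) = trace_op (P ** Y) * cnj (trace_op X)"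
      using hs_mat_right[of X "trace_op (P ** Y)" "mat 1"] by (simp add: hs_def trace_adj)
    ultimately show ?thesis
      by (simp add: hs_add_left hs_add_right Dblock_adj[OF P P cP cP] mult.commute)
  qed
  have injF: "inj ?F"
    by (rule inj_from_adj[OF linF adjFG Dsblock_trace_inj[OF irr P Pne cP rho]])
  define X' where "X' = X - mat (trace_op X) ** \<rho>"
  have "Dblock P P X' = 0"
  proof -
    have "Dblock P P X = 0" "Dblock P P \<rho> = 0" using Dblock_zero_iff[OF P P cP cP] X rho by blast+
    then show ?thesis unfolding X'_def
      by (simp add: linear_diff[OF linear_Dblock] Dblock_mat)
  qed
  moreover have "trace_op X' = 0" by (simp add: X'_def trace_mat_mult rho(3))
  ultimately have "?F X' = 0" by simp
  then have "X' = 0" using injF linear_inj_iff[OF linF] by blast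
  then show ?thesis by (simp add: X'_def)
qed

lemma S_psd: "psd_op S"
  unfolding S_def by (intro psd_sum psd_adj_mult)

text \<open>A bound \<open>\<lambda>\<close> for the jump part on the unit sphere; beyond it the resolvent of \<open>D\<close> is
  positivity preserving.\<close>

lemma bound_exists:
  "\<exists>lam::real. lam > 0 \<and> (\<forall>v::complex^'n. norm v = 1 \<longrightarrow> (\<Sum>a\<in>A. (norm (adj (h a) *v v))^2) < lam)"
proof -
  let ?g = "\<lambda>v::complex^'n. (\<Sum>a\<in>A. (norm (adj (h a) *v v))^2)"
  have c: "continuous_on (sphere 0 1) ?g"
    unfolding matrix_vector_mult_def by (intro continuous_intros)
  obtain v0 where "v0 \<in> sphere 0 1" "\<And>v. v \<in> sphere 0 1 \<Longrightarrow> ?g v \<le> ?g v0"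
    using continuous_attains_sup[OF compact_sphere _ c] by auto
  moreover have "0 \<le> ?g v0" by (intro sum_nonneg) auto
  ultimately show ?thesis
    by (intro exI[of _ "?g v0 + 1"]) (auto simp: add_pos_nonneg intro!: le_less_trans[OF _ less_add_one])
qed

lemma D_quad_eigen:
  assumes Yh: "Y = adj Y" and Yv0: "Y *v v0 = of_real \<mu> *s v0"
  shows "Re (cinner v0 (D Y *v v0)) = - \<mu> * Re (cinner v0 (S *v v0))
           + (\<Sum>a\<in>A. Re (cinner (adj (h a) *v v0) (Y *v (adj (h a) *v v0))))"
proof -
  define m where "m = complex_of_real \<mu>"
  have cY: "cinner w (Y *v u) = cinner (Y *v w) u" for w u by (metis Yh cinner_adj)
  have t1: "cinner v0 (K *v (Y *v v0)) + cinner v0 (Y *v (adj K *v v0)) = - m * cinner v0 (S *v v0)"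
  proof -
    have "cinner v0 (K *v (Y *v v0)) + cinner v0 (Y *v (adj K *v v0))
        = m * (cinner v0 (K *v v0) + cinner v0 (adj K *v v0))"
      by (simp add: Yv0 cY matrix_vector_scale cinner_scale_right cinner_scale_left m_def algebra_simps)
    also have "cinner v0 (K *v v0) + cinner v0 (adj K *v v0) = cinner v0 ((K + adj K) *v v0)"
      by (simp add: matrix_vector_mult_add_rdistrib cinner_add_right)
    also have "\<dots> = - cinner v0 (S *v v0)" by (simp add: K_adjK mv_uminus cinner_uminus_right)
    finally show ?thesis by simp
  qed
  have t2: "cinner v0 (J Y *v v0) = (\<Sum>a\<in>A. cinner (adj (h a) *v v0) (Y *v (adj (h a) *v v0)))"
    by (simp add: J_def matrix_vector_sum_left cinner_sum_right matrix_vector_mul_assoc[symmetric] cinner_adj)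
  have "cinner v0 (D Y *v v0)
      = - m * cinner v0 (S *v v0) + (\<Sum>a\<in>A. cinner (adj (h a) *v v0) (Y *v (adj (h a) *v v0)))"
    unfolding D_form t1[symmetric] t2[symmetric]
    by (simp add: matrix_vector_mult_add_rdistrib cinner_add_right matrix_vector_mul_assoc[symmetric])
  then show ?thesis by (simp add: m_def Re_sum)
qed

text \<open>At a bottom
  eigenvector \<open>v\<^sub>0\<close> with eigenvalue \<open>\<mu> < 0\<close> the form of \<open>D(Y)\<close> is at least \<open>\<mu> \<Sum> |h\<^sup>\<dagger>v\<^sub>0|\<^sup>2 > \<mu>\<lambda>\<close>.\<close>

lemma pos_res:
  assumes lam: "\<And>v::complex^'n. norm v = 1 \<Longrightarrow> (\<Sum>a\<in>A. (norm (adj (h a) *v v))^2) < lam"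
    and Yh: "Y = adj Y" and X: "psd_op X" and eq: "lam *\<^sub>R Y - D Y = X"
  shows "psd_op Y"
proof -
  obtain \<mu> v0 where nv0: "norm v0 = 1" and Yv0: "Y *v v0 = of_real \<mu> *s v0"
    and Fge: "\<And>u. \<mu> * norm u ^ 2 \<le> Re (cinner u (Y *v u))"
    using bottom_eigenvector[OF Yh] by blast
  show ?thesis
  proof (cases "\<mu> \<ge> 0")
    case True
    have "0 \<le> Re (cinner v (Y *v v))" for v using Fge[of v] True
      by (meson order_trans zero_le_mult_iff zero_le_power2)
    then show ?thesis using Yh by (simp add: psd_op_iff)
  next
    case False
    let ?N = "\<Sum>a\<in>A. (norm (adj (h a) *v v0))^2"
    have "0 \<le> Re (cinner v0 (S *v v0))" using S_psd by (simp add: psd_op_iff)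
    then have "0 \<le> - \<mu> * Re (cinner v0 (S *v v0))" using False by (simp add: mult_nonpos_nonneg)
    moreover have "(\<Sum>a\<in>A. \<mu> * (norm (adj (h a) *v v0))^2)
        \<le> (\<Sum>a\<in>A. Re (cinner (adj (h a) *v v0) (Y *v (adj (h a) *v v0))))"
      by (intro sum_mono Fge)
    ultimately have ge: "\<mu> * ?N \<le> Re (cinner v0 (D Y *v v0))"
      unfolding D_quad_eigen[OF Yh Yv0] by (simp add: sum_distrib_left)
    have "cinner v0 (X *v v0) = of_real lam * cinner v0 (Y *v v0) - cinner v0 (D Y *v v0)"
      unfolding eq[symmetric]
      by (simp add: matrix_vector_mult_diff_rdistrib mv_scaleR_left cinner_diff_right cinner_scale_right)
    then have "Re (cinner v0 (X *v v0)) = lam * \<mu> - Re (cinner v0 (D Y *v v0))"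
      using nv0 by (simp add: Yv0 cinner_scale_right cinner_self)
    also have "\<dots> \<le> \<mu> * (lam - ?N)" using ge by (simp add: algebra_simps)
    also have "\<dots> < 0" using False lam[OF nv0] by (simp add: mult_neg_pos)
    finally have "Re (cinner v0 (X *v v0)) < 0" .
    moreover have "0 \<le> Re (cinner v0 (X *v v0))" using X by (simp add: psd_op_iff)
    ultimately show ?thesis by simp
  qed
qed

definition resolv :: "real \<Rightarrow> 'n op \<Rightarrow> 'n op" where
  "resolv lam Y = lam *\<^sub>R Y - D Y"

lemma resolv_adj: "adj (resolv lam Y) = resolv lam (adj Y)"
  by (simp add: resolv_def adj_scaleR adj_D)

lemma resolv_mat: "resolv lam (mat c ** Y) = mat c ** resolv lam Y"
  by (simp add: resolv_def D_mat matrix_diff_ldistrib scaleR_mat_comm)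

lemma linear_resolv: "linear (resolv lam)"
  by (rule linearI)
     (simp_all add: resolv_def D_add linear_cmul[OF linear_D] scaleR_add_right scaleR_diff_right algebra_simps)

lemma resolv_sandwich:
  assumes cP: "comm_all H h A P" shows "resolv lam (P ** Y ** P) = P ** resolv lam Y ** P"
  by (simp add: resolv_def D_left[OF cP] D_right[OF cP] matrix_diff_ldistrib matrix_diff_rdistrib
      linear_cmul[OF sandwich_linear])

text \<open>Beyond the bound, the resolvent is injective: on hermitian operators by positivity applied
  to \<open>\<plusminus>Y\<close>, in general via the hermitian parts.\<close>

lemma resolv_herm_zero:
  assumes lam: "\<And>v::complex^'n. norm v = 1 \<Longrightarrow> (\<Sum>a\<in>A. (norm (adj (h a) *v v))^2) < lam"
    and Yh: "Y = adj Y" and L0: "resolv lam Y = 0"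
  shows "Y = 0"
proof -
  have p1: "psd_op Y" using pos_res[OF lam Yh psd_zero] L0 by (simp add: resolv_def)
  have "resolv lam (- Y) = 0" using L0 linear_neg[OF linear_resolv] by simp
  then have p2: "psd_op (- Y)" using pos_res[OF lam _ psd_zero, of "- Y"] Yh by (simp add: resolv_def)
  have "Y *v v = 0" for v
  proof -
    have "0 \<le> Re (cinner v (Y *v v))" using p1 by (simp add: psd_op_iff)
    moreover have "0 \<le> Re (cinner v ((- Y) *v v))" using p2 by (simp add: psd_op_iff)
    ultimately have "Re (cinner v (Y *v v)) = 0" by (simp add: mv_uminus cinner_uminus_right)
    then show ?thesis using psd_kernel[OF p1] by blast
  qed
  then show ?thesis using matrix_eq[of Y 0] by simp
qed

lemma resolv_inj:
  assumes lam: "\<And>v::complex^'n. norm v = 1 \<Longrightarrow> (\<Sum>a\<in>A. (norm (adj (h a) *v v))^2) < lam"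
  shows "inj (resolv lam)"
  unfolding linear_inj_iff[OF linear_resolv]
proof (intro allI impI)
  fix Y assume L0: "resolv lam Y = 0"
  have "resolv lam (herm_part Y) = 0" "resolv lam (aherm_part Y) = 0"
    using kernel_herm_parts[of "resolv lam", OF linear_add[OF linear_resolv] resolv_mat
        resolv_adj[symmetric] L0] by simp_all
  then have "herm_part Y = 0" "aherm_part Y = 0"
    using resolv_herm_zero[OF lam herm_part_herm] resolv_herm_zero[OF lam aherm_part_herm] by blast+
  then show "Y = 0" by (subst herm_decomp) simp
qed

lemma resolv_preimage_density:
  assumes lam: "\<And>v::complex^'n. norm v = 1 \<Longrightarrow> (\<Sum>a\<in>A. (norm (adj (h a) *v v))^2) < lam"
    and lpos: "lam > 0" and cP: "comm_all H h A P"
    and X: "psd_op X" "trace_op X = 1" "X = P ** X ** P" and LY: "resolv lam Y = X"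
  shows "psd_op (lam *\<^sub>R Y) \<and> trace_op (lam *\<^sub>R Y) = 1 \<and> lam *\<^sub>R Y = P ** (lam *\<^sub>R Y) ** P"
proof -
  have injL: "inj (resolv lam)" by (rule resolv_inj[OF lam])
  have YP: "P ** Y ** P = Y"
  proof -
    have "resolv lam (P ** Y ** P) = resolv lam Y" using X(3) by (simp add: resolv_sandwich[OF cP] LY)
    then show ?thesis using injL by (simp add: inj_eq)
  qed
  have Yh: "Y = adj Y"
  proof -
    have "X = adj X" using X(1) by (simp add: psd_op_iff)
    then have "resolv lam (adj Y) = resolv lam Y" by (simp add: resolv_adj[symmetric] LY)
    then show ?thesis using injL by (simp add: inj_eq)
  qed
  have "psd_op Y" using pos_res[OF lam Yh X(1)] LY by (simp add: resolv_def)
  moreover have "of_real lam * trace_op Y = 1"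
  proof -
    have "trace_op (resolv lam Y) = of_real lam * trace_op Y"
      by (simp add: resolv_def trace_scaleR trace_D)
    then show ?thesis using LY X(2) by simp
  qed
  ultimately show ?thesis using lpos YP
    by (simp add: psd_scaleR trace_scaleR linear_cmul[OF sandwich_linear] del: matrix_mul_assoc)
qed

text \<open>Every nonzero block \<open>P\<close> carries a stationary density operator: a fixed point of the
  normalised resolvent on the compact convex set of densities of \<open>P\<close> (Brouwer).\<close>

lemma density_exists:
  assumes P: "orth_proj P" and Pne: "P \<noteq> 0" and cP: "comm_all H h A P"
  shows "\<exists>\<rho>. density_op \<rho> \<and> \<rho> = P ** \<rho> ** P \<and> D \<rho> = 0"
proof -
  obtain lam where lpos: "lam > 0"
    and lam: "\<And>v::complex^'n. norm v = 1 \<Longrightarrow> (\<Sum>a\<in>A. (norm (adj (h a) *v v))^2) < lam"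
    using bound_exists by blast
  have "surj (resolv lam)"
    using resolv_inj[OF lam] linear_resolv by (simp add: linear_injective_imp_surjective)
  then obtain g where lg: "linear g" and Lg: "resolv lam \<circ> g = id"
    using linear_surjective_right_inverse[OF linear_resolv] by blast
  have Lg': "resolv lam (g X) = X" for X using Lg by (simp add: fun_eq_iff)
  define T where "T = {M::'n op. psd_op M \<and> trace_op M = 1 \<and> M = P ** M ** P}"
  have neT: "T \<noteq> {}" using density_block_nonempty[OF P Pne] unfolding T_def by blast
  have cT: "compact T" and cvT: "convex T"
    unfolding T_def by (rule compact_density_block, rule convex_density_block)
  have "bounded_linear g" using lg linear_conv_bounded_linear by blast
  then have contPhi: "continuous_on T (\<lambda>X. lam *\<^sub>R g X)"
    by (intro continuous_intros linear_continuous_on)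
  have PhiT: "(\<lambda>X. lam *\<^sub>R g X) \<in> T \<rightarrow> T"
  proof
    fix X assume "X \<in> T"
    then show "lam *\<^sub>R g X \<in> T"
      using resolv_preimage_density[OF lam lpos cP _ _ _ Lg'] by (simp add: T_def)
  qed
  obtain \<rho> where rT: "\<rho> \<in> T" and fx: "lam *\<^sub>R g \<rho> = \<rho>"
    using brouwer[OF cT cvT neT contPhi PhiT] by blast
  have "resolv lam \<rho> = resolv lam (lam *\<^sub>R g \<rho>)" using fx by simp
  also have "\<dots> = lam *\<^sub>R \<rho>" by (simp add: linear_cmul[OF linear_resolv] Lg')
  finally have "resolv lam \<rho> = lam *\<^sub>R \<rho>" .
  then have "D \<rho> = 0" by (simp add: resolv_def)
  then show ?thesis using rT by (auto simp: T_def density_op_def)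
qed

text \<open>An intertwiner \<open>W = P\<^sub>i W P\<^sub>j \<noteq> 0\<close> commuting with the generator is a positive multiple of
  a partial isometry: \<open>W\<^sup>\<dagger>W\<close> and \<open>WW\<^sup>\<dagger>\<close> are symmetries in the blocks of \<open>P\<^sub>j\<close> and \<open>P\<^sub>i\<close>, hence
  scalar there, and the two scalars agree since \<open>W(W\<^sup>\<dagger>W) = (WW\<^sup>\<dagger>)W\<close>.\<close>

lemma intertwiner_scale:
  fixes Pi Pj :: "'n op"
  assumes irr_i: "no_proper_collecting H h A Pi" and irr_j: "no_proper_collecting H h A Pj"
    and proj_i: "orth_proj Pi" and proj_j: "orth_proj Pj" and Pine: "Pi \<noteq> 0" and Pjne: "Pj \<noteq> 0"
    and cPi: "comm_all H h A Pi" and cPj: "comm_all H h A Pj"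
    and W: "W \<noteq> 0" "W = Pi ** W ** Pj" and cW: "comm_all H h A W"
  shows "\<exists>c>0. adj W ** W = mat (of_real c) ** Pj \<and> W ** adj W = mat (of_real c) ** Pi"
proof -
  have aPi: "adj Pi = Pi" "Pi ** Pi = Pi" using proj_i by (simp_all add: orth_projD)
  have aPj: "adj Pj = Pj" "Pj ** Pj = Pj" using proj_j by (simp_all add: orth_projD)
  have caW: "comm_all H h A (adj W)" by (rule comm_all_adj[OF herm cW])
  have PiW: "Pi ** W = W" and WPj: "W ** Pj = W" by (metis W(2) aPi(2) aPj(2) matrix_mul_assoc)+
  have aWPi: "adj W ** Pi = adj W" using arg_cong[OF PiW, of adj] by (simp add: adj_mult aPi)
  have PjaW: "Pj ** adj W = adj W" using arg_cong[OF WPj, of adj] by (simp add: adj_mult aPj)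
  have "adj W ** W = Pj ** (adj W ** W) ** Pj" by (metis PjaW WPj matrix_mul_assoc)
  moreover have "Ds (adj W ** W) = 0" by (rule Ds_comm_zero[OF comm_all_mult[OF caW cW]])
  ultimately obtain c where c: "adj W ** W = mat (of_real c) ** Pj"
    using herm_block_scalar[OF irr_j proj_j Pjne cPj, of "adj W ** W"] psd_zero by (force simp: adj_mult)
  have "W ** adj W = Pi ** (W ** adj W) ** Pi" by (metis PiW aWPi matrix_mul_assoc)
  moreover have "Ds (W ** adj W) = 0" by (rule Ds_comm_zero[OF comm_all_mult[OF cW caW]])
  ultimately obtain c' where c': "W ** adj W = mat (of_real c') ** Pi"
    using herm_block_scalar[OF irr_i proj_i Pine cPi, of "W ** adj W"] psd_zero by (force simp: adj_mult)
  have "of_real (norm W ^ 2) = trace_op (adj W ** W)" by (simp add: trace_hs_self)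
  also have "\<dots> = of_real c * of_real (norm Pj ^ 2)"
    using trace_hs_self[of Pj] aPj by (simp add: c trace_mat_mult)
  finally have "norm W ^ 2 = c * norm Pj ^ 2" by (metis of_real_eq_iff of_real_mult)
  moreover have "norm W > 0" "norm Pj > 0" using W(1) Pjne by auto
  ultimately have cpos: "c > 0" by (metis zero_less_mult_pos2 zero_less_power)
  have "mat (of_real c) ** W = W ** (adj W ** W)" by (simp add: c mat_mult_assoc_comm WPj)
  also have "\<dots> = (W ** adj W) ** W" by (simp add: matrix_mul_assoc)
  also have "\<dots> = mat (of_real c') ** W" by (simp add: c' matrix_mul_assoc[symmetric] PiW)
  finally have eqm: "mat (of_real c) ** W = mat (of_real c') ** W" .
  obtain v where v: "W *v v \<noteq> 0" using W(1) matrix_eq[of W 0] by auto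
  have "of_real c *s (W *v v) = of_real c' *s (W *v v)"
    using arg_cong[OF eqm, of "\<lambda>M. M *v v"] by (simp add: matrix_vector_mul_assoc[symmetric] mat_vector_mult)
  then have "(of_real c - of_real c') *s (W *v v) = 0" by (simp add: vector_sub_rdistrib)
  then have "c' = c" using v by simp
  then show ?thesis using c c' cpos by blast
qed

text \<open>Forward direction: a nonzero stationary block \<open>\<sigma> = P\<^sub>i\<sigma>P\<^sub>j\<close> yields a dual block \<open>W\<close>, which is
  an intertwiner; normalising it gives the symmetry \<open>U = V + V\<^sup>\<dagger>\<close>.\<close>

lemma symmetry_of_block_kernel:
  fixes Pi Pj :: "'n op"
  assumes irr_i: "no_proper_collecting H h A Pi" and irr_j: "no_proper_collecting H h A Pj"
    and proj_i: "orth_proj Pi" and proj_j: "orth_proj Pj"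
    and sum1: "Pi + Pj = mat 1" and orth: "Pi ** Pj = 0"
    and cPi: "comm_all H h A Pi" and cPj: "comm_all H h A Pj"
    and \<sigma>: "\<sigma> \<noteq> 0" "\<sigma> = Pi ** \<sigma> ** Pj" "D \<sigma> = 0"
  shows "\<exists>U. unitary_op U \<and> U ** H = H ** U \<and> (\<forall>\<alpha>\<in>A. U ** h \<alpha> = h \<alpha> ** U)
           \<and> U ** Pj = Pi ** U \<and> U ** U = mat 1"
proof -
  have Pine: "Pi \<noteq> 0" and Pjne: "Pj \<noteq> 0" using \<sigma>(1,2) by auto
  obtain W where W: "W \<noteq> 0" "W = Pi ** W ** Pj" "Ds W = 0"
    using dual_kernel_exists[OF proj_i proj_j cPi cPj \<sigma>] by blast
  have cW: "comm_all H h A W"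
    by (rule comm_all_of_kernel[OF irr_i proj_i Pine cPi irr_j proj_j Pjne cPj W(2,3)])
  obtain c where cpos: "c > 0"
    and c: "adj W ** W = mat (of_real c) ** Pj" "W ** adj W = mat (of_real c) ** Pi"
    using intertwiner_scale[OF irr_i irr_j proj_i proj_j Pine Pjne cPi cPj W(1,2) cW] by blast
  define s where "s = complex_of_real (1 / sqrt c)"
  define V where "V = mat s ** W"
  have "sqrt c * sqrt c = c" using cpos by simp
  then have "1 / sqrt c * (1 / sqrt c) * c = 1" using cpos by (simp add: field_simps)
  then have ss: "s * s * of_real c = 1" unfolding s_def by (metis of_real_1 of_real_mult)
  have aV: "adj V = mat s ** adj W" by (simp add: V_def s_def adj_mult mat_mult_comm)
  have "adj V ** V = mat (s * s) ** (adj W ** W)" "V ** adj V = mat (s * s) ** (W ** adj W)"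
    unfolding aV unfolding V_def
    by (simp_all only: matrix_mul_assoc[symmetric] mat_mult_assoc_comm[of "adj W"]
        mat_mult_assoc_comm[of W] mat_mult_mat_left)
  then have "adj V ** V = Pj" "V ** adj V = Pi" by (simp_all add: c mat_mult_mat_left ss)
  moreover have "V = Pi ** V ** Pj" by (simp add: V_def sandwich_mat W(2)[symmetric])
  ultimately have U: "unitary_op (V + adj V) \<and> (V + adj V) ** (V + adj V) = mat 1
      \<and> (V + adj V) ** Pj = Pi ** (V + adj V)"
    using symmetry_of_partial_isometry[OF proj_i proj_j sum1 orth] by blast
  have cV: "comm_all H h A V" unfolding V_def by (rule comm_all_mult[OF comm_all_mat cW])
  then have "comm_all H h A (V + adj V)" by (intro comm_all_add comm_all_adj[OF herm])
  then show ?thesis using U unfolding comm_all_def by blast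
qed

text \<open>Converse: \<open>Ds(P\<^sub>j) = 0\<close>, so by duality the \<open>P\<^sub>j\<close>-block kernel of \<open>D\<close> contains some \<open>X \<noteq> 0\<close>,
  and \<open>UX\<close> is a nonzero stationary block \<open>P\<^sub>i \<cdot> P\<^sub>j\<close>.\<close>

lemma block_kernel_of_symmetry:
  fixes Pi Pj :: "'n op"
  assumes proj_j: "orth_proj Pj" and sum1: "Pi + Pj = mat 1" and cPj: "comm_all H h A Pj"
    and U: "unitary_op U" "U ** H = H ** U" "\<forall>\<alpha>\<in>A. U ** h \<alpha> = h \<alpha> ** U"
      "U ** Pj = Pi ** U" "U ** U = mat 1"
  shows "\<exists>\<sigma>. \<sigma> \<noteq> 0 \<and> \<sigma> = Pi ** \<sigma> ** Pj \<and> D \<sigma> = 0"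
proof -
  have cU: "comm_all H h A U" by (rule comm_all_unitary[OF U(1-3)])
  have Pjne: "Pj \<noteq> 0"
  proof
    assume "Pj = 0"
    then have "Pi ** U ** U = 0" using U(4) by simp
    then have "Pi = 0" using U(5) by (simp add: matrix_mul_assoc[symmetric])
    then show False using sum1 \<open>Pj = 0\<close> mat_1_neq_0[where 'n='n] by simp
  qed
  have "Pj = Pj ** Pj ** Pj" using proj_j by (simp add: orth_projD)
  then obtain X where X: "X \<noteq> 0" "X = Pj ** X ** Pj" "D X = 0"
    using kernel_exists_from_dual[OF proj_j proj_j cPj cPj Pjne _ Ds_comm_zero[OF cPj]] by blast
  have "U ** (U ** X) = X" using U(5) by (simp add: matrix_mul_assoc)
  then have "U ** X \<noteq> 0" using X(1) by auto
  moreover have "U ** X = Pi ** (U ** X) ** Pj" using U(4) X(2) by (metis matrix_mul_assoc)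
  moreover have "D (U ** X) = 0" by (simp add: D_left[OF cU] X(3))
  ultimately show ?thesis by blast
qed

lemma stationary_state_unique:
  assumes irr: "no_proper_collecting H h A P" and P: "orth_proj P" and Pne: "P \<noteq> 0"
    and cP: "comm_all H h A P"
  shows "\<exists>!\<rho>. density_op \<rho> \<and> \<rho> = P ** \<rho> ** P \<and> D \<rho> = 0"
proof -
  obtain \<rho> where \<rho>: "density_op \<rho>" "\<rho> = P ** \<rho> ** P" "D \<rho> = 0"
    using density_exists[OF P Pne cP] by blast
  have "\<rho>' = \<rho>" if "density_op \<rho>'" "\<rho>' = P ** \<rho>' ** P" "D \<rho>' = 0" for \<rho>'
    using kernel_unique[OF irr P Pne cP \<rho>(2,3) _ that(2,3)] \<rho>(1) that(1)
    by (simp add: density_op_def)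
  then show ?thesis using \<rho> by blast
qed

text \<open>Every stationary block \<open>\<sigma> = P\<^sub>i\<sigma>P\<^sub>j\<close> is a multiple of \<open>U\<rho>\<^sub>j\<close>: \<open>U\<sigma>\<close> is a stationary block of
  \<open>P\<^sub>j\<close>, hence a multiple of \<open>\<rho>\<^sub>j\<close>.\<close>

lemma block_kernel_multiple:
  fixes Pi Pj :: "'n op"
  assumes irr_j: "no_proper_collecting H h A Pj" and proj_j: "orth_proj Pj" and Pjne: "Pj \<noteq> 0"
    and cPj: "comm_all H h A Pj" and sum1: "Pi + Pj = mat 1"
    and U: "unitary_op U" "U ** H = H ** U" "\<forall>\<alpha>\<in>A. U ** h \<alpha> = h \<alpha> ** U"
      "U ** Pj = Pi ** U" "U ** U = mat 1"
    and \<rho>: "density_op \<rho>" "\<rho> = Pj ** \<rho> ** Pj" "D \<rho> = 0"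
    and \<sigma>: "\<sigma> = Pi ** \<sigma> ** Pj" "D \<sigma> = 0"
  shows "\<exists>c. \<sigma> = cscale c (U ** \<rho>)"
proof -
  have cU: "comm_all H h A U" by (rule comm_all_unitary[OF U(1-3)])
  have "U ** Pi = U ** (mat 1 - Pj)" using sum1 by (metis add_diff_cancel_right')
  also have "\<dots> = (mat 1 - Pi) ** U" using U(4) by (simp add: matrix_diff_ldistrib matrix_diff_rdistrib)
  also have "\<dots> = Pj ** U" using sum1 by (metis add_diff_cancel_left')
  finally have UPi: "U ** Pi = Pj ** U" .
  have "U ** \<sigma> = Pj ** (U ** \<sigma>) ** Pj" using \<sigma>(1) UPi by (metis matrix_mul_assoc)
  moreover have "D (U ** \<sigma>) = 0" using \<sigma>(2) by (simp add: D_left[OF cU])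
  ultimately have "U ** \<sigma> = mat (trace_op (U ** \<sigma>)) ** \<rho>"
    using kernel_unique[OF irr_j proj_j Pjne cPj \<rho>(2,3)] \<rho>(1) by (simp add: density_op_def)
  then have "U ** (U ** \<sigma>) = mat (trace_op (U ** \<sigma>)) ** (U ** \<rho>)" by (metis mat_mult_assoc_comm)
  moreover have "U ** (U ** \<sigma>) = \<sigma>" using U(5) by (simp add: matrix_mul_assoc)
  ultimately show ?thesis by (metis cscale_mat)
qed

end

theorem mainTheorem11:
  fixes H Pi Pj :: "'n::finite op" and h :: "'a \<Rightarrow> 'n op" and A :: "'a set"
  assumes finA: "finite A"
    and herm: "H = adj H"
    and proj_i: "orth_proj Pi" and proj_j: "orth_proj Pj"
    and sum1: "Pi + Pj = mat 1" and orth: "Pi ** Pj = 0"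
    and commH: "H ** Pi = Pi ** H" "H ** Pj = Pj ** H"
    and commh: "\<forall>\<alpha>\<in>A. h \<alpha> ** Pi = Pi ** h \<alpha> \<and> h \<alpha> ** Pj = Pj ** h \<alpha>"
    and irr_i: "no_proper_collecting H h A Pi"
    and irr_j: "no_proper_collecting H h A Pj"
  shows "((\<exists>\<sigma>. \<sigma> \<noteq> 0 \<and> \<sigma> = Pi ** \<sigma> ** Pj \<and> lindblad H h A \<sigma> = 0)
          \<longleftrightarrow> (\<exists>U. unitary_op U \<and> U ** H = H ** U \<and> (\<forall>\<alpha>\<in>A. U ** h \<alpha> = h \<alpha> ** U)
                  \<and> U ** Pj = Pi ** U \<and> U ** U = mat 1))
       \<and> ((\<exists>\<sigma>. \<sigma> \<noteq> 0 \<and> \<sigma> = Pi ** \<sigma> ** Pj \<and> lindblad H h A \<sigma> = 0) \<longrightarrow>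
            (\<exists>!\<rho>. density_op \<rho> \<and> \<rho> = Pj ** \<rho> ** Pj \<and> lindblad H h A \<rho> = 0)
          \<and> (\<forall>U \<rho>j. unitary_op U \<and> U ** H = H ** U \<and> (\<forall>\<alpha>\<in>A. U ** h \<alpha> = h \<alpha> ** U)
                  \<and> U ** Pj = Pi ** U \<and> U ** U = mat 1
                  \<and> density_op \<rho>j \<and> \<rho>j = Pj ** \<rho>j ** Pj \<and> lindblad H h A \<rho>j = 0 \<longrightarrow>
                (\<forall>\<sigma>. \<sigma> = Pi ** \<sigma> ** Pj \<and> lindblad H h A \<sigma> = 0 \<longrightarrow>
                     (\<exists>c. \<sigma> = cscale c (U ** \<rho>j)))))"
proof -
  interpret lindblad_gen H h A using finA herm by unfold_locales
  have cPi: "comm_all H h A Pi" and cPj: "comm_all H h A Pj"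
    using proj_i proj_j commH commh by (auto intro!: comm_all_herm simp: orth_projD)
  have equiv: "(\<exists>\<sigma>. \<sigma> \<noteq> 0 \<and> \<sigma> = Pi ** \<sigma> ** Pj \<and> D \<sigma> = 0)
      \<longleftrightarrow> (\<exists>U. unitary_op U \<and> U ** H = H ** U \<and> (\<forall>\<alpha>\<in>A. U ** h \<alpha> = h \<alpha> ** U)
              \<and> U ** Pj = Pi ** U \<and> U ** U = mat 1)"
    using symmetry_of_block_kernel[OF irr_i irr_j proj_i proj_j sum1 orth cPi cPj]
      block_kernel_of_symmetry[OF proj_j sum1 cPj] by blast
  moreover have "Pj \<noteq> 0" if "\<exists>\<sigma>. \<sigma> \<noteq> 0 \<and> \<sigma> = Pi ** \<sigma> ** Pj \<and> D \<sigma> = 0"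
    using that by auto
  ultimately show ?thesis
    using stationary_state_unique[OF irr_j proj_j _ cPj]
      block_kernel_multiple[OF irr_j proj_j _ cPj sum1] by blast
qed

end
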